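(* Let $(T,\rho,\tau)$ be the multi-type Galton–Watson hypertree, $W^\pm_t$ the number of generation-$t$ vertices with spin $\pm1$, $\mathcal G_t$ the $\sigma$-algebra generated by $W^{\pm}_k$, $k\le t$, and $M_t=\alpha^{-t}(W_t^++W_t^-)$, $\Delta_t=\beta^{-t}(W_t^+-W_t^-)$. Then $\{M_t\}$ and $\{\Delta_t\}$ are $\mathcal G_t$-martingales. If $\beta^2>\alpha>1$, then $\{M_t\}$ and $\{\Delta_t\}$ are uniformly integrable, and the martingale $\{\Delta_t\}$ converges almost surely and in $L^2$ to a random variable $\Delta_\infty$ with $\mathbb E\Delta_\infty=1$ and finite variance, and $\lim_{t\to\infty}\mathbb E|\Delta_t^2-\Delta_\infty^2|=0$.
   Context: Fix an integer $d\ge3$ and constants $a\ge b>0$; $\alpha=(d-1)\frac{a+(2^{d-1}-1)b}{2^{d-1}}$, $\beta=(d-1)\frac{a-b}{2^{d-1}}$. Multi-type Galton–Watson hypertree $(T,\rho,\tau)$: the root $\rho$ (generation 0) has spin $\tau(\rho)=+1$. Recursively, each vertex $v$ of generation $t$ independently receives $\mathrm{Pois}(\alpha/(d-1))$ new hyperedges, each consisting of $v$ and $d-1$ new vertices (children of $v$, generation $t+1$), pairwise intersecting only at $v$. Each such hyperedge independently gets a type $r\in\{0,\dots,d-1\}$: type $d-1$ with probability $\frac{(d-1)a}{\alpha2^{d-1}}$ and type $r\le d-2$ with probability $\frac{(d-1)b\binom{d-1}{r}}{\alpha2^{d-1}}$; in a type-$r$ hyperedge a uniformly random set of $r$ of the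 $d-1$ children get spin $\tau(v)$ and the rest get $-\tau(v)$. *)

theory Defs
  imports "HOL-Probability.Probability"
begin

definition gw_alpha :: "nat \<Rightarrow> real \<Rightarrow> real \<Rightarrow> real" where
  "gw_alpha d a b = (real d - 1) * (a + (2 ^ (d - 1) - 1) * b) / 2 ^ (d - 1)"

definition gw_beta :: "nat \<Rightarrow> real \<Rightarrow> real \<Rightarrow> real" where
  "gw_beta d a b = (real d - 1) * (a - b) / 2 ^ (d - 1)"

definition edge_type_pmf :: "nat \<Rightarrow> real \<Rightarrow> real \<Rightarrow> nat pmf" where
  "edge_type_pmf d a b = embed_pmf (\<lambda>r.
     if r = d - 1 then (real d - 1) * a / (gw_alpha d a b * 2 ^ (d - 1))
     else if r \<le> d - 2 then (real d - 1) * b * real ((d - 1) choose r) / (gw_alpha d a b * 2 ^ (d - 1))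
     else 0)"

fun iid_sum :: "nat \<Rightarrow> (nat \<times> nat) pmf \<Rightarrow> (nat \<times> nat) pmf" where
  "iid_sum 0 D = return_pmf (0, 0)"
| "iid_sum (Suc n) D = D \<bind> (\<lambda>x. iid_sum n D \<bind> (\<lambda>y. return_pmf (fst x + fst y, snd x + snd y)))"

text \<open>Counts (children with the same spin, children with opposite spin) produced by one
  hyperedge: a type-r hyperedge has r children with the parent's spin and d-1-r with the
  opposite spin.\<close>
definition edge_same_opp :: "nat \<Rightarrow> real \<Rightarrow> real \<Rightarrow> (nat \<times> nat) pmf" where
  "edge_same_opp d a b = map_pmf (\<lambda>r. (r, d - 1 - r)) (edge_type_pmf d a b)"

definition offspring_same_opp :: "nat \<Rightarrow> real \<Rightarrow> real \<Rightarrow> (nat \<times> nat) pmf" where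
  "offspring_same_opp d a b =
     poisson_pmf (gw_alpha d a b / (real d - 1)) \<bind> (\<lambda>N. iid_sum N (edge_same_opp d a b))"

text \<open>Transition law of (W+_t, W-_t) -> (W+_{t+1}, W-_{t+1}): every vertex of generation t
  reproduces independently; a +1 vertex's same-spin children are +1, a -1 vertex's same-spin
  children are -1.\<close>
definition gw_step :: "nat \<Rightarrow> real \<Rightarrow> real \<Rightarrow> nat \<times> nat \<Rightarrow> (nat \<times> nat) pmf" where
  "gw_step d a b w =
     iid_sum (fst w) (offspring_same_opp d a b) \<bind> (\<lambda>x.
     iid_sum (snd w) (map_pmf (\<lambda>(x1, x2). (x2, x1)) (offspring_same_opp d a b)) \<bind> (\<lambda>y.
     return_pmf (fst x + fst y, snd x + snd y)))"

text \<open>W is a realisation of the spin-count process (W+_t, W-_t)_t of the hypertree with root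
  spin +1: W 0 = (1,0) and, given the history, the next generation has law gw_step.\<close>
definition is_gw_count_process ::
  "nat \<Rightarrow> real \<Rightarrow> real \<Rightarrow> 'w measure \<Rightarrow> (nat \<Rightarrow> 'w \<Rightarrow> nat \<times> nat) \<Rightarrow> bool" where
  "is_gw_count_process d a b M W \<longleftrightarrow>
     prob_space M \<and>
     (\<forall>t. W t \<in> M \<rightarrow>\<^sub>M count_space UNIV) \<and>
     (\<forall>\<omega>\<in>space M. W 0 \<omega> = (1, 0)) \<and>
     (\<forall>t (h :: nat \<Rightarrow> nat \<times> nat) s.
        measure M {\<omega>\<in>space M. (\<forall>k\<le>t. W k \<omega> = h k) \<and> W (Suc t) \<omega> = s}
        = measure M {\<omega>\<in>space M. \<forall>k\<le>t. W k \<omega> = h k} * pmf (gw_step d a b (h t)) s)"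

definition gen_filtration :: "'w measure \<Rightarrow> (nat \<Rightarrow> 'w \<Rightarrow> 'b) \<Rightarrow> nat \<Rightarrow> 'w measure" where
  "gen_filtration M W t = sigma (space M) {W k -` A \<inter> space M | k A. k \<le> t}"

definition martingale :: "'w measure \<Rightarrow> (nat \<Rightarrow> 'w measure) \<Rightarrow> (nat \<Rightarrow> 'w \<Rightarrow> real) \<Rightarrow> bool" where
  "martingale M F X \<longleftrightarrow>
     (\<forall>t. subalgebra M (F t) \<and> sets (F t) \<subseteq> sets (F (Suc t)) \<and>
          X t \<in> borel_measurable (F t) \<and> integrable M (X t) \<and>
          (AE \<omega> in M. real_cond_exp M (F t) (X (Suc t)) \<omega> = X t \<omega>))"

definition uniformly_integrable :: "'w measure \<Rightarrow> (nat \<Rightarrow> 'w \<Rightarrow> real) \<Rightarrow> bool" where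
  "uniformly_integrable M X \<longleftrightarrow>
     (\<forall>t. integrable M (X t)) \<and>
     (\<forall>\<epsilon>>0. \<exists>K. \<forall>t. (\<integral>\<omega>. (if \<bar>X t \<omega>\<bar> \<ge> K then \<bar>X t \<omega>\<bar> else 0) \<partial>M) \<le> \<epsilon>)"

end

theory Submission
  imports Defs
begin

text \<open>Given generation t, every vertex independently produces a compound Poisson number of
  children, counted as (same spin, opposite spin), with means (\<alpha> + \<beta>) / 2 and (\<alpha> - \<beta>) / 2.
  Hence the total W+ + W- and the difference W+ - W- are multiplied in conditional mean by \<alpha>
  and \<beta>, which gives the two martingales, and their conditional variances are a constant
  times the current population W+ + W-. The second moments of M and \<Delta> therefore satisfy
  linear recursions which stay bounded when \<alpha> > 1 and \<beta>^2 > \<alpha>, giving uniform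
  integrability. For \<Delta> the increments satisfy E (\<Delta>(t+1) - \<Delta>(t))^2 = O((\<alpha>/\<beta>^2)^t);
  weighting their squares by q^-t for some \<alpha>/\<beta>^2 < q < 1 keeps them summable in mean, which
  yields almost sure convergence, an L^2 tail bound of order (\<alpha>/\<beta>^2)^t, and from it the
  remaining limits.\<close>

section \<open>Sums of independent pairs of counts\<close>

definition pair_conv_pmf :: "(nat \<times> nat) pmf \<Rightarrow> (nat \<times> nat) pmf \<Rightarrow> (nat \<times> nat) pmf" where
  "pair_conv_pmf p q = p \<bind> (\<lambda>x. q \<bind> (\<lambda>y. return_pmf (fst x + fst y, snd x + snd y)))"

lemma iid_sum_Suc_conv: "iid_sum (Suc n) D = pair_conv_pmf D (iid_sum n D)"
  by (simp add: pair_conv_pmf_def)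

definition pair_additive :: "(nat \<times> nat \<Rightarrow> 'a::comm_monoid_add) \<Rightarrow> bool" where
  "pair_additive f \<longleftrightarrow> f (0, 0) = 0 \<and> (\<forall>x y. f (fst x + fst y, snd x + snd y) = f x + f y)"

lemma pair_additive_ennreal:
  fixes f :: "nat \<times> nat \<Rightarrow> real"
  assumes "pair_additive f" "\<And>z. 0 \<le> f z"
  shows "pair_additive (\<lambda>z. ennreal (f z))"
  using assms by (simp add: pair_additive_def ennreal_plus)

lemma pair_additive_fst: "pair_additive (\<lambda>z. real (fst z))"
  and pair_additive_snd: "pair_additive (\<lambda>z. real (snd z))"
  and pair_additive_sum: "pair_additive (\<lambda>z. of_nat (fst z + snd z) :: ennreal)"
  by (simp_all add: pair_additive_def)

lemma nn_integral_pair_conv_additive: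
  assumes "pair_additive f"
  shows "(\<integral>\<^sup>+z. f z \<partial>pair_conv_pmf p q) = (\<integral>\<^sup>+z. f z \<partial>p) + (\<integral>\<^sup>+z. f z \<partial>q)"
proof -
  have "(\<integral>\<^sup>+z. f z \<partial>pair_conv_pmf p q) = (\<integral>\<^sup>+x. \<integral>\<^sup>+y. f x + f y \<partial>q \<partial>p)"
    using assms by (simp add: pair_conv_pmf_def pair_additive_def)
  also have "\<dots> = (\<integral>\<^sup>+x. f x + (\<integral>\<^sup>+y. f y \<partial>q) \<partial>p)"
    by (simp add: nn_integral_add measure_pmf.emeasure_space_1)
  also have "\<dots> = (\<integral>\<^sup>+z. f z \<partial>p) + (\<integral>\<^sup>+z. f z \<partial>q)"
    by (simp add: nn_integral_add measure_pmf.emeasure_space_1)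
  finally show ?thesis .
qed

lemma nn_integral_pair_conv_product:
  assumes "pair_additive f" "pair_additive g"
  shows "(\<integral>\<^sup>+z. f z * g z \<partial>pair_conv_pmf p q) =
    (\<integral>\<^sup>+z. f z * g z \<partial>p) + (\<integral>\<^sup>+z. f z \<partial>p) * (\<integral>\<^sup>+z. g z \<partial>q)
    + (\<integral>\<^sup>+z. g z \<partial>p) * (\<integral>\<^sup>+z. f z \<partial>q) + (\<integral>\<^sup>+z. f z * g z \<partial>q)"
proof -
  have "(\<integral>\<^sup>+z. f z * g z \<partial>pair_conv_pmf p q) =
      (\<integral>\<^sup>+x. \<integral>\<^sup>+y. (f x * g x + g x * f y) + (f x * g y + f y * g y) \<partial>q \<partial>p)"
    using assms by (simp add: pair_conv_pmf_def pair_additive_def algebra_simps)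
  also have "\<dots> = (\<integral>\<^sup>+x. (f x * g x + g x * (\<integral>\<^sup>+y. f y \<partial>q))
      + (f x * (\<integral>\<^sup>+y. g y \<partial>q) + (\<integral>\<^sup>+y. f y * g y \<partial>q)) \<partial>p)"
    by (simp add: nn_integral_add nn_integral_cmult measure_pmf.emeasure_space_1)
  also have "\<dots> = ((\<integral>\<^sup>+z. f z * g z \<partial>p) + (\<integral>\<^sup>+z. g z \<partial>p) * (\<integral>\<^sup>+y. f y \<partial>q))
      + ((\<integral>\<^sup>+z. f z \<partial>p) * (\<integral>\<^sup>+y. g y \<partial>q) + (\<integral>\<^sup>+y. f y * g y \<partial>q))"
    by (simp add: nn_integral_add nn_integral_cmult nn_integral_multc measure_pmf.emeasure_space_1)
  finally show ?thesis by (simp add: algebra_simps)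
qed

lemma nn_integral_iid_sum_additive:
  assumes "pair_additive f"
  shows "(\<integral>\<^sup>+z. f z \<partial>iid_sum n D) = of_nat n * (\<integral>\<^sup>+z. f z \<partial>D)"
  using assms
  by (induction n) (simp_all add: pair_additive_def iid_sum_Suc_conv nn_integral_pair_conv_additive
      algebra_simps del: iid_sum.simps(2))

lemma nn_integral_iid_sum_product:
  assumes "pair_additive f" "pair_additive g"
  shows "(\<integral>\<^sup>+z. f z * g z \<partial>iid_sum n D) = of_nat n * (\<integral>\<^sup>+z. f z * g z \<partial>D)
     + of_nat (n * (n - 1)) * ((\<integral>\<^sup>+z. f z \<partial>D) * (\<integral>\<^sup>+z. g z \<partial>D))"
proof (induction n)
  case 0
  then show ?case using assms by (simp add: pair_additive_def)
next
  case (Suc n)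
  have "of_nat (Suc n * (Suc n - 1)) = (of_nat (n * (n - 1)) + of_nat n + of_nat n :: ennreal)"
    by (cases n) (simp_all add: algebra_simps)
  then show ?case using Suc assms
    by (simp only: iid_sum_Suc_conv nn_integral_pair_conv_product nn_integral_iid_sum_additive)
      (simp add: algebra_simps)
qed

lemma prod_shifted_eq_fact_div:
  "(\<Prod>i<k. real (n + k - i)) = fact (n + k) / fact n"
proof (induction k arbitrary: n)
  case (Suc k)
  have "(\<Prod>i<Suc k. real (n + Suc k - i)) = (\<Prod>i<k. real (Suc n + k - i)) * real (Suc n)"
    by (simp add: prod.lessThan_Suc del: of_nat_diff)
  also have "\<dots> = fact (Suc n + k) / fact (Suc n) * real (Suc n)"
    by (simp only: Suc.IH)
  also have "\<dots> = fact (n + Suc k) / fact n"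
    by (simp add: field_simps del: of_nat_Suc)
  finally show ?case .
qed simp

lemma poisson_factorial_moment_sums:
  assumes "0 < l"
  shows "(\<lambda>N. pmf (poisson_pmf l) N * (\<Prod>i<k. real (N - i))) sums (l ^ k)"
proof -
  have vanish: "(\<Prod>i<k. real (N - i)) = 0" if "N < k" for N
    using that by (intro prod_zero) auto
  have "(\<lambda>n. l ^ k * (l ^ n / fact n * exp (- l))) sums (l ^ k * (exp l * exp (- l)))"
    by (intro sums_mult sums_mult2) (use exp_converges[of l] in \<open>simp add: divide_inverse mult.commute\<close>)
  moreover have "l ^ k * (l ^ n / fact n * exp (- l)) =
      pmf (poisson_pmf l) (n + k) * (\<Prod>i<k. real (n + k - i))" for n
    using assms prod_shifted_eq_fact_div[where k=k and n=n]
    by (simp add: power_add field_simps del: of_nat_diff)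
  ultimately have "(\<lambda>n. pmf (poisson_pmf l) (n + k) * (\<Prod>i<k. real (n + k - i))) sums (l ^ k)"
    by (simp add: exp_minus)
  then show ?thesis
    by (subst (asm) sums_iff_shift) (simp add: vanish)
qed

lemma nn_integral_poisson_factorial_moment:
  assumes "0 < l"
  shows "(\<integral>\<^sup>+N. ennreal (\<Prod>i<k. real (N - i)) \<partial>poisson_pmf l) = ennreal (l ^ k)"
proof -
  have "(\<integral>\<^sup>+N. ennreal (\<Prod>i<k. real (N - i)) \<partial>poisson_pmf l) =
      (\<Sum>N. ennreal (pmf (poisson_pmf l) N * (\<Prod>i<k. real (N - i))))"
    by (simp add: nn_integral_measure_pmf nn_integral_count_space_nat ennreal_mult' prod_nonneg
        mult.commute)
  also have "\<dots> = ennreal (l ^ k)"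
    using assms poisson_factorial_moment_sums
    by (intro suminf_ennreal_eq mult_nonneg_nonneg prod_nonneg) auto
  finally show ?thesis .
qed

lemma nn_integral_poisson_mean:
  "0 < l \<Longrightarrow> (\<integral>\<^sup>+N. of_nat N \<partial>poisson_pmf l) = ennreal l"
  using nn_integral_poisson_factorial_moment[of l 1] by (simp add: ennreal_of_nat_eq_real_of_nat)

lemma nn_integral_poisson_second_factorial_moment:
  "0 < l \<Longrightarrow> (\<integral>\<^sup>+N. of_nat (N * (N - 1)) \<partial>poisson_pmf l) = ennreal (l\<^sup>2)"
  using nn_integral_poisson_factorial_moment[of l 2]
  by (simp add: ennreal_of_nat_eq_real_of_nat numeral_2_eq_2 lessThan_Suc power2_eq_square mult.commute)

definition compound_poisson_pmf :: "real \<Rightarrow> (nat \<times> nat) pmf \<Rightarrow> (nat \<times> nat) pmf" where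
  "compound_poisson_pmf l E = poisson_pmf l \<bind> (\<lambda>N. iid_sum N E)"

lemma nn_integral_compound_poisson_additive:
  assumes "pair_additive f" "0 < l"
  shows "(\<integral>\<^sup>+z. f z \<partial>compound_poisson_pmf l E) = ennreal l * (\<integral>\<^sup>+z. f z \<partial>E)"
  using assms
  by (simp add: compound_poisson_pmf_def nn_integral_iid_sum_additive nn_integral_multc
      nn_integral_poisson_mean)

lemma nn_integral_compound_poisson_product:
  assumes "pair_additive f" "pair_additive g" "0 < l"
  shows "(\<integral>\<^sup>+z. f z * g z \<partial>compound_poisson_pmf l E) =
     ennreal l * (\<integral>\<^sup>+z. f z * g z \<partial>E) + ennreal (l\<^sup>2) * ((\<integral>\<^sup>+z. f z \<partial>E) * (\<integral>\<^sup>+z. g z \<partial>E))"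
  using assms nn_integral_poisson_second_factorial_moment[OF assms(3)]
  by (simp add: compound_poisson_pmf_def nn_integral_iid_sum_product nn_integral_multc nn_integral_add
      nn_integral_poisson_mean del: of_nat_mult)

definition finite_second_moment :: "(nat \<times> nat) pmf \<Rightarrow> bool" where
  "finite_second_moment p \<longleftrightarrow>
     (\<integral>\<^sup>+z. of_nat (fst z + snd z) * of_nat (fst z + snd z) \<partial>p) < \<infinity>"

definition lin_stat :: "real \<Rightarrow> real \<Rightarrow> nat \<times> nat \<Rightarrow> real" where
  "lin_stat c1 c2 z = c1 * real (fst z) + c2 * real (snd z)"

lemma finite_second_moment_integrable:
  assumes "finite_second_moment p" and bound: "\<And>z. \<bar>f z\<bar> \<le> C * (1 + real (fst z + snd z) ^ 2)"
  shows "integrable p f"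
proof (rule Bochner_Integration.integrable_bound)
  have "(\<integral>\<^sup>+z. ennreal (norm (real (fst z + snd z) ^ 2)) \<partial>p) < \<infinity>"
    using assms(1) by (simp add: finite_second_moment_def power2_eq_square ennreal_mult'
        ennreal_of_nat_eq_real_of_nat del: of_nat_add)
  then have "integrable p (\<lambda>z. real (fst z + snd z) ^ 2)"
    by (intro integrableI_bounded) auto
  then show "integrable p (\<lambda>z. C * (1 + real (fst z + snd z) ^ 2))"
    by simp
  show "AE z in p. norm (f z) \<le> norm (C * (1 + real (fst z + snd z) ^ 2))"
    using bound by (intro AE_I2) (auto intro: order_trans[OF _ abs_ge_self])
qed auto

lemma finite_second_moment_integrable_monomials:
  assumes "finite_second_moment p"
  shows "integrable p (\<lambda>z. real (fst z))" "integrable p (\<lambda>z. real (snd z))"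
    "integrable p (\<lambda>z. real (fst z) * real (fst z))" "integrable p (\<lambda>z. real (fst z) * real (snd z))"
    "integrable p (\<lambda>z. real (snd z) * real (snd z))"
proof -
  have le_sq: "x \<le> 1 + x ^ 2" if "0 \<le> x" for x :: real
  proof -
    have "0 \<le> (x - 1) ^ 2" by simp
    then show ?thesis using that by (simp add: power2_eq_square algebra_simps)
  qed
  have s: "real (fst z) \<le> 1 + real (fst z + snd z) ^ 2" "real (snd z) \<le> 1 + real (fst z + snd z) ^ 2"
    for z :: "nat \<times> nat"
    using le_sq[of "real (fst z + snd z)"] by simp_all
  have p: "real i * real j \<le> 1 + real (fst z + snd z) ^ 2"
    if "i \<le> fst z + snd z" "j \<le> fst z + snd z" for i j and z :: "nat \<times> nat"
  proof -
    have "real i * real j \<le> real (fst z + snd z) * real (fst z + snd z)"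
      using that by (intro mult_mono) simp_all
    then show ?thesis by (simp add: power2_eq_square)
  qed
  show "integrable p (\<lambda>z. real (fst z))" "integrable p (\<lambda>z. real (snd z))"
    "integrable p (\<lambda>z. real (fst z) * real (fst z))" "integrable p (\<lambda>z. real (fst z) * real (snd z))"
    "integrable p (\<lambda>z. real (snd z) * real (snd z))"
    using s p
    by (auto intro!: finite_second_moment_integrable[OF assms, where C=1])
qed

lemma integral_lin_stat:
  assumes "finite_second_moment p"
  shows "integrable p (lin_stat c1 c2)"
    "(\<integral>z. lin_stat c1 c2 z \<partial>p) = c1 * (\<integral>z. real (fst z) \<partial>p) + c2 * (\<integral>z. real (snd z) \<partial>p)"
  using finite_second_moment_integrable_monomials[OF assms] by (simp_all add: lin_stat_def[abs_def])

lemma integral_lin_stat_square: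
  assumes "finite_second_moment p"
  shows "integrable p (\<lambda>z. (lin_stat c1 c2 z)\<^sup>2)"
    "(\<integral>z. (lin_stat c1 c2 z)\<^sup>2 \<partial>p) = c1\<^sup>2 * (\<integral>z. real (fst z) * real (fst z) \<partial>p)
       + 2 * c1 * c2 * (\<integral>z. real (fst z) * real (snd z) \<partial>p) + c2\<^sup>2 * (\<integral>z. real (snd z) * real (snd z) \<partial>p)"
proof -
  have "(\<lambda>z. (lin_stat c1 c2 z)\<^sup>2) = (\<lambda>z. c1\<^sup>2 * (real (fst z) * real (fst z))
      + 2 * c1 * c2 * (real (fst z) * real (snd z)) + c2\<^sup>2 * (real (snd z) * real (snd z)))"
    by (simp add: fun_eq_iff lin_stat_def power2_eq_square algebra_simps)
  then show "integrable p (\<lambda>z. (lin_stat c1 c2 z)\<^sup>2)"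
    "(\<integral>z. (lin_stat c1 c2 z)\<^sup>2 \<partial>p) = c1\<^sup>2 * (\<integral>z. real (fst z) * real (fst z) \<partial>p)
       + 2 * c1 * c2 * (\<integral>z. real (fst z) * real (snd z) \<partial>p) + c2\<^sup>2 * (\<integral>z. real (snd z) * real (snd z) \<partial>p)"
    using finite_second_moment_integrable_monomials[OF assms] by simp_all
qed

lemma finite_second_moment_first_moment:
  assumes "finite_second_moment p"
  shows "(\<integral>\<^sup>+z. of_nat (fst z + snd z) \<partial>p) < \<infinity>"
proof -
  have "(\<integral>\<^sup>+z. of_nat (fst z + snd z) \<partial>p) \<le> (\<integral>\<^sup>+z. of_nat (fst z + snd z) * of_nat (fst z + snd z) \<partial>p)"
    by (intro nn_integral_mono) (metis le_square of_nat_le_iff of_nat_mult)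
  then show ?thesis
    using assms unfolding finite_second_moment_def by (simp add: le_less_trans)
qed

lemma finite_second_moment_pair_conv:
  assumes "finite_second_moment p" "finite_second_moment q"
  shows "finite_second_moment (pair_conv_pmf p q)"
  using assms finite_second_moment_first_moment[OF assms(1)] finite_second_moment_first_moment[OF assms(2)]
  unfolding finite_second_moment_def
  by (simp add: nn_integral_pair_conv_product[OF pair_additive_sum pair_additive_sum] ennreal_mult_less_top
      del: of_nat_add)

lemma integral_pair_conv_additive:
  fixes f :: "nat \<times> nat \<Rightarrow> real" and p q :: "(nat \<times> nat) pmf"
  assumes "pair_additive f" and nonneg: "\<And>z. 0 \<le> f z" and "integrable p f" "integrable q f"
  shows "(\<integral>z. f z \<partial>pair_conv_pmf p q) = (\<integral>z. f z \<partial>p) + (\<integral>z. f z \<partial>q)"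
proof -
  have nn: "(\<integral>\<^sup>+z. ennreal (f z) \<partial>r) = ennreal (\<integral>z. f z \<partial>r)" if "integrable r f" for r :: "(nat \<times> nat) pmf"
    using that nonneg by (intro nn_integral_eq_integral) auto
  have "(\<integral>\<^sup>+z. ennreal (f z) \<partial>pair_conv_pmf p q) = ennreal ((\<integral>z. f z \<partial>p) + (\<integral>z. f z \<partial>q))"
    using assms by (simp add: nn_integral_pair_conv_additive pair_additive_ennreal nn ennreal_plus)
  then show ?thesis
    using assms by (subst (asm) nn_integral_eq_integrable) auto
qed

lemma integral_pair_conv_product:
  fixes f g :: "nat \<times> nat \<Rightarrow> real" and p q :: "(nat \<times> nat) pmf"
  assumes "pair_additive f" "pair_additive g" and nonneg: "\<And>z. 0 \<le> f z" "\<And>z. 0 \<le> g z"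
    and "integrable p f" "integrable p g" "integrable p (\<lambda>z. f z * g z)"
    and "integrable q f" "integrable q g" "integrable q (\<lambda>z. f z * g z)"
  shows "(\<integral>z. f z * g z \<partial>pair_conv_pmf p q) =
    (\<integral>z. f z * g z \<partial>p) + (\<integral>z. f z \<partial>p) * (\<integral>z. g z \<partial>q)
    + (\<integral>z. g z \<partial>p) * (\<integral>z. f z \<partial>q) + (\<integral>z. f z * g z \<partial>q)"
proof -
  have nn: "(\<integral>\<^sup>+z. ennreal (h z) \<partial>r) = ennreal (\<integral>z. h z \<partial>r)"
    if "integrable r h" "\<And>z. 0 \<le> h z" for r :: "(nat \<times> nat) pmf" and h
    using that by (intro nn_integral_eq_integral) auto
  have prod: "(\<integral>\<^sup>+z. ennreal (f z) * ennreal (g z) \<partial>r) = ennreal (\<integral>z. f z * g z \<partial>r)"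
    if "integrable r (\<lambda>z. f z * g z)" for r :: "(nat \<times> nat) pmf"
    using that nonneg by (simp add: nn flip: ennreal_mult)
  have "(\<integral>\<^sup>+z. ennreal (f z * g z) \<partial>pair_conv_pmf p q) =
    ennreal ((\<integral>z. f z * g z \<partial>p) + (\<integral>z. f z \<partial>p) * (\<integral>z. g z \<partial>q)
    + (\<integral>z. g z \<partial>p) * (\<integral>z. f z \<partial>q) + (\<integral>z. f z * g z \<partial>q))"
    using assms
    by (simp add: ennreal_mult nn_integral_pair_conv_product pair_additive_ennreal prod nn ennreal_plus
        integral_nonneg_AE del: ennreal_plus_if)
  then show ?thesis
    using assms by (subst (asm) nn_integral_eq_integrable) (auto intro!: add_nonneg_nonneg integral_nonneg_AE)
qed

lemma integral_pair_conv_lin_stat: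
  assumes "finite_second_moment p" "finite_second_moment q"
  shows "(\<integral>z. lin_stat c1 c2 z \<partial>pair_conv_pmf p q) =
    (\<integral>z. lin_stat c1 c2 z \<partial>p) + (\<integral>z. lin_stat c1 c2 z \<partial>q)"
proof -
  note m = finite_second_moment_integrable_monomials[OF assms(1)]
    finite_second_moment_integrable_monomials[OF assms(2)]
  have "(\<integral>z. real (fst z) \<partial>pair_conv_pmf p q) = (\<integral>z. real (fst z) \<partial>p) + (\<integral>z. real (fst z) \<partial>q)"
    "(\<integral>z. real (snd z) \<partial>pair_conv_pmf p q) = (\<integral>z. real (snd z) \<partial>p) + (\<integral>z. real (snd z) \<partial>q)"
    using m by (auto intro!: integral_pair_conv_additive pair_additive_fst pair_additive_snd)
  then show ?thesis
    using assms finite_second_moment_pair_conv[OF assms] by (simp add: integral_lin_stat algebra_simps)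
qed

lemma integral_pair_conv_lin_stat_square:
  assumes "finite_second_moment p" "finite_second_moment q"
  shows "(\<integral>z. (lin_stat c1 c2 z)\<^sup>2 \<partial>pair_conv_pmf p q) = (\<integral>z. (lin_stat c1 c2 z)\<^sup>2 \<partial>p)
    + 2 * (\<integral>z. lin_stat c1 c2 z \<partial>p) * (\<integral>z. lin_stat c1 c2 z \<partial>q) + (\<integral>z. (lin_stat c1 c2 z)\<^sup>2 \<partial>q)"
proof -
  note m = finite_second_moment_integrable_monomials[OF assms(1)]
    finite_second_moment_integrable_monomials[OF assms(2)]
  note prod = integral_pair_conv_product[where p=p and q=q]
  have "(\<integral>z. real (fst z) * real (fst z) \<partial>pair_conv_pmf p q) = (\<integral>z. real (fst z) * real (fst z) \<partial>p)
      + 2 * (\<integral>z. real (fst z) \<partial>p) * (\<integral>z. real (fst z) \<partial>q) + (\<integral>z. real (fst z) * real (fst z) \<partial>q)"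
    "(\<integral>z. real (fst z) * real (snd z) \<partial>pair_conv_pmf p q) = (\<integral>z. real (fst z) * real (snd z) \<partial>p)
      + (\<integral>z. real (fst z) \<partial>p) * (\<integral>z. real (snd z) \<partial>q) + (\<integral>z. real (snd z) \<partial>p) * (\<integral>z. real (fst z) \<partial>q)
      + (\<integral>z. real (fst z) * real (snd z) \<partial>q)"
    "(\<integral>z. real (snd z) * real (snd z) \<partial>pair_conv_pmf p q) = (\<integral>z. real (snd z) * real (snd z) \<partial>p)
      + 2 * (\<integral>z. real (snd z) \<partial>p) * (\<integral>z. real (snd z) \<partial>q) + (\<integral>z. real (snd z) * real (snd z) \<partial>q)"
    using m by (simp_all add: prod pair_additive_fst pair_additive_snd)
  then show ?thesis
    using assms finite_second_moment_pair_conv[OF assms]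
    by (simp add: integral_lin_stat integral_lin_stat_square) (simp add: power2_eq_square algebra_simps)
qed

lemma finite_second_moment_iid_sum:
  "finite_second_moment D \<Longrightarrow> finite_second_moment (iid_sum n D)"
proof (induction n)
  case 0
  then show ?case by (simp add: finite_second_moment_def)
qed (simp add: iid_sum_Suc_conv finite_second_moment_pair_conv del: iid_sum.simps(2))

lemma lin_stat_zero [simp]: "lin_stat c1 c2 (0, 0) = 0"
  by (simp add: lin_stat_def)

lemma integral_iid_sum_lin_stat:
  assumes "finite_second_moment D"
  shows "(\<integral>z. lin_stat c1 c2 z \<partial>iid_sum n D) = real n * (\<integral>z. lin_stat c1 c2 z \<partial>D)"
  using assms
  by (induction n) (simp_all add: iid_sum_Suc_conv integral_pair_conv_lin_stat
      finite_second_moment_iid_sum algebra_simps del: iid_sum.simps(2))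

lemma integral_iid_sum_lin_stat_square:
  assumes "finite_second_moment D"
  shows "(\<integral>z. (lin_stat c1 c2 z)\<^sup>2 \<partial>iid_sum n D) =
    real n * (\<integral>z. (lin_stat c1 c2 z)\<^sup>2 \<partial>D) + real n * (real n - 1) * (\<integral>z. lin_stat c1 c2 z \<partial>D)\<^sup>2"
proof (induction n)
  case (Suc n)
  then show ?case
    using assms
    by (simp add: iid_sum_Suc_conv integral_pair_conv_lin_stat_square integral_iid_sum_lin_stat
        finite_second_moment_iid_sum del: iid_sum.simps(2))
      (simp add: power2_eq_square algebra_simps)
qed simp

lemma finite_second_moment_compound_poisson:
  assumes "0 < l" "finite_second_moment E"
  shows "finite_second_moment (compound_poisson_pmf l E)"
  using assms finite_second_moment_first_moment[OF assms(2)]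
  unfolding finite_second_moment_def
  by (simp add: nn_integral_compound_poisson_product[OF pair_additive_sum pair_additive_sum assms(1)]
      ennreal_mult_less_top del: of_nat_add)

lemma integral_compound_poisson_lin_stat:
  assumes "0 < l" "finite_second_moment E"
  shows "(\<integral>z. lin_stat c1 c2 z \<partial>compound_poisson_pmf l E) = l * (\<integral>z. lin_stat c1 c2 z \<partial>E)"
proof -
  have mean: "(\<integral>z. f z \<partial>compound_poisson_pmf l E) = l * (\<integral>z. f z \<partial>E)"
    if "pair_additive f" "\<And>z. 0 \<le> f z" "integrable E f" for f
  proof -
    have "(\<integral>\<^sup>+z. ennreal (f z) \<partial>compound_poisson_pmf l E) = ennreal (l * (\<integral>z. f z \<partial>E))"
      using that assms
      by (simp add: nn_integral_compound_poisson_additive pair_additive_ennreal nn_integral_eq_integral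
          ennreal_mult integral_nonneg_AE)
    then show ?thesis
      using that assms by (subst (asm) nn_integral_eq_integrable) (auto intro!: integral_nonneg_AE)
  qed
  show ?thesis
    using assms finite_second_moment_compound_poisson[OF assms]
      finite_second_moment_integrable_monomials[OF assms(2)]
    by (simp add: integral_lin_stat mean pair_additive_fst pair_additive_snd algebra_simps)
qed

definition two_type_step :: "(nat \<times> nat) pmf \<Rightarrow> nat \<times> nat \<Rightarrow> (nat \<times> nat) pmf" where
  "two_type_step P w = pair_conv_pmf (iid_sum (fst w) P) (iid_sum (snd w) (map_pmf prod.swap P))"

lemma finite_second_moment_swap:
  "finite_second_moment P \<Longrightarrow> finite_second_moment (map_pmf prod.swap P)"
  by (simp add: finite_second_moment_def add.commute)

lemma lin_stat_swap: "lin_stat c1 c2 (prod.swap z) = lin_stat c2 c1 z"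
  by (simp add: lin_stat_def add.commute)

lemma finite_second_moment_two_type_step:
  "finite_second_moment P \<Longrightarrow> finite_second_moment (two_type_step P w)"
  by (simp add: two_type_step_def finite_second_moment_pair_conv finite_second_moment_iid_sum
      finite_second_moment_swap)

lemma integral_two_type_step_lin_stat:
  assumes "finite_second_moment P"
  shows "(\<integral>z. lin_stat c1 c2 z \<partial>two_type_step P w) =
    real (fst w) * (\<integral>z. lin_stat c1 c2 z \<partial>P) + real (snd w) * (\<integral>z. lin_stat c2 c1 z \<partial>P)"
  using assms
  by (simp add: two_type_step_def integral_pair_conv_lin_stat integral_iid_sum_lin_stat
      finite_second_moment_iid_sum finite_second_moment_swap lin_stat_swap)

lemma integral_two_type_step_lin_stat_square:
  assumes "finite_second_moment P"
  shows "(\<integral>z. (lin_stat c1 c2 z)\<^sup>2 \<partial>two_type_step P w) =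
    real (fst w) * measure_pmf.variance P (lin_stat c1 c2) + real (snd w) * measure_pmf.variance P (lin_stat c2 c1)
    + (\<integral>z. lin_stat c1 c2 z \<partial>two_type_step P w)\<^sup>2"
proof -
  have var: "measure_pmf.variance P (lin_stat c d) =
      (\<integral>z. (lin_stat c d z)\<^sup>2 \<partial>P) - (\<integral>z. lin_stat c d z \<partial>P)\<^sup>2" for c d
    using assms by (intro measure_pmf.variance_eq integral_lin_stat integral_lin_stat_square)
  show ?thesis
    using assms
    by (simp add: two_type_step_def integral_pair_conv_lin_stat_square integral_pair_conv_lin_stat
        integral_iid_sum_lin_stat_square integral_iid_sum_lin_stat finite_second_moment_iid_sum
        finite_second_moment_swap lin_stat_swap var)
      (simp add: power2_eq_square algebra_simps)
qed

section \<open>The offspring law of the hypertree\<close>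

lemma sum_choose_below: "(\<Sum>r<n. real (n choose r)) = 2 ^ n - 1"
proof -
  have "real (\<Sum>r\<le>n. n choose r) = 2 ^ n"
    by (simp only: choose_row_sum) simp
  then show ?thesis
    by (simp add: lessThan_Suc_atMost[symmetric])
qed

lemma sum_linear_choose_below: "(\<Sum>r<n. real r * real (n choose r)) = real n * 2 ^ (n - 1) - real n"
proof -
  have "real (\<Sum>r\<le>n. r * (n choose r)) = real n * 2 ^ (n - 1)"
    by (simp only: choose_linear_sum) simp
  then show ?thesis
    by (simp add: lessThan_Suc_atMost[symmetric])
qed

text \<open>The parameter n is d - 1, the number of children in a hyperedge; writing d = Suc n avoids
  truncated subtraction.\<close>
locale gw_hypertree =
  fixes n :: nat and a b :: real
  assumes two_le_n: "2 \<le> n" and b_le_a: "b \<le> a" and b_pos: "0 < b"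
begin

abbreviation "\<alpha> \<equiv> gw_alpha (Suc n) a b"
abbreviation "\<beta> \<equiv> gw_beta (Suc n) a b"

lemma alpha_eq: "\<alpha> * 2 ^ n = real n * (a + (2 ^ n - 1) * b)"
  by (simp add: gw_alpha_def)

lemma alpha_pos: "0 < \<alpha>"
proof -
  have "0 \<le> (2 ^ n - 1) * b"
    using b_pos by simp
  then have "0 < a + (2 ^ n - 1) * b"
    using b_le_a b_pos by linarith
  then have "0 < real n * (a + (2 ^ n - 1) * b)"
    using two_le_n by simp
  then show ?thesis
    by (simp add: gw_alpha_def)
qed

lemma beta_eq: "\<beta> = real n * (a - b) / 2 ^ n"
  by (simp add: gw_beta_def)

definition edge_type_weight :: "nat \<Rightarrow> real" where
  "edge_type_weight r =
     (if r = n then real n * a else if r < n then real n * b * real (n choose r) else 0) / (\<alpha> * 2 ^ n)"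

lemma edge_type_weight_nonneg: "0 \<le> edge_type_weight r"
  using alpha_pos b_le_a b_pos by (simp add: edge_type_weight_def)

lemma sum_edge_type_weight:
  "(\<Sum>r\<le>n. f r * edge_type_weight r) =
     real n * (a * f n + b * (\<Sum>r<n. f r * real (n choose r))) / (\<alpha> * 2 ^ n)"
proof -
  have "(\<Sum>r<n. f r * edge_type_weight r) = (\<Sum>r<n. real n * b * (f r * real (n choose r)) / (\<alpha> * 2 ^ n))"
    by (intro sum.cong) (auto simp: edge_type_weight_def)
  then show ?thesis
    by (simp add: lessThan_Suc_atMost[symmetric] edge_type_weight_def sum_divide_distrib[symmetric]
        sum_distrib_left[symmetric] add_divide_distrib algebra_simps)
qed

lemma edge_type_weight_total: "(\<Sum>r\<le>n. edge_type_weight r) = 1"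
proof -
  have "(\<Sum>r\<le>n. edge_type_weight r) = \<alpha> * 2 ^ n / (\<alpha> * 2 ^ n)"
    using sum_edge_type_weight[of "\<lambda>_. 1"] by (simp add: sum_choose_below alpha_eq mult.commute)
  then show ?thesis
    using alpha_pos by simp
qed

lemma pmf_edge_type: "pmf (edge_type_pmf (Suc n) a b) r = edge_type_weight r"
proof -
  have "(\<lambda>r. if r = Suc n - 1 then (real (Suc n) - 1) * a / (\<alpha> * 2 ^ (Suc n - 1))
      else if r \<le> Suc n - 2 then (real (Suc n) - 1) * b * real ((Suc n - 1) choose r) / (\<alpha> * 2 ^ (Suc n - 1))
      else 0) = edge_type_weight"
    using two_le_n by (auto simp: fun_eq_iff edge_type_weight_def)
  moreover have "(\<integral>\<^sup>+r. ennreal (edge_type_weight r) \<partial>count_space UNIV) = 1"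
  proof -
    have "(\<integral>\<^sup>+r. ennreal (edge_type_weight r) \<partial>count_space UNIV) = (\<Sum>r\<le>n. ennreal (edge_type_weight r))"
      by (intro nn_integral_count_space') (auto simp: edge_type_weight_def)
    also have "\<dots> = 1"
      by (simp add: edge_type_weight_total edge_type_weight_nonneg)
    finally show ?thesis .
  qed
  ultimately show ?thesis
    unfolding edge_type_pmf_def by (simp add: pmf_embed_pmf edge_type_weight_nonneg)
qed

lemma set_pmf_edge_type: "set_pmf (edge_type_pmf (Suc n) a b) \<subseteq> {..n}"
  by (auto simp: set_pmf_iff pmf_edge_type edge_type_weight_def split: if_splits)

lemma integral_edge_type: "(\<integral>r. f r \<partial>edge_type_pmf (Suc n) a b) = (\<Sum>r\<le>n. f r * edge_type_weight r)"
  using set_pmf_edge_type by (subst integral_measure_pmf_real[where A="{..n}"]) (auto simp: pmf_edge_type)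

abbreviation "edge \<equiv> edge_same_opp (Suc n) a b"

lemma finite_second_moment_edge: "finite_second_moment edge"
proof -
  have "(\<integral>\<^sup>+r. of_nat (r + (n - r)) * of_nat (r + (n - r)) \<partial>edge_type_pmf (Suc n) a b) =
      (\<integral>\<^sup>+r. of_nat n * of_nat n \<partial>edge_type_pmf (Suc n) a b)"
    using set_pmf_edge_type by (intro nn_integral_cong_AE AE_pmfI) (auto simp del: of_nat_add)
  then show ?thesis
    by (simp add: finite_second_moment_def edge_same_opp_def measure_pmf.emeasure_space_1
        ennreal_of_nat_eq_real_of_nat ennreal_mult_less_top)
qed

lemma integral_edge_lin_stat:
  "(\<integral>z. lin_stat c1 c2 z \<partial>edge) = (\<Sum>r\<le>n. (c1 * real r + c2 * real (n - r)) * edge_type_weight r)"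
  by (simp add: edge_same_opp_def lin_stat_def integral_edge_type)

lemma integral_edge_total: "(\<integral>z. lin_stat 1 1 z \<partial>edge) = real n"
proof -
  have "(\<Sum>r\<le>n. (real r + real (n - r)) * edge_type_weight r) = (\<Sum>r\<le>n. real n * edge_type_weight r)"
    by (intro sum.cong) auto
  then show ?thesis
    by (simp add: integral_edge_lin_stat flip: sum_distrib_left) (simp add: edge_type_weight_total)
qed

lemma integral_edge_diff: "(\<integral>z. lin_stat 1 (-1) z \<partial>edge) = real n * real n * (a - b) / (\<alpha> * 2 ^ n)"
proof -
  have "(\<Sum>r<n. (real r - real (n - r)) * real (n choose r)) =
      2 * (\<Sum>r<n. real r * real (n choose r)) - real n * (\<Sum>r<n. real (n choose r))"
    by (simp add: of_nat_diff sum_subtractf sum_distrib_left left_diff_distrib algebra_simps)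
  also have "\<dots> = - real n"
    using two_le_n by (simp add: sum_choose_below sum_linear_choose_below algebra_simps
        power_Suc[symmetric] del: power_Suc)
  finally have "(\<Sum>r<n. (real r - real (n - r)) * real (n choose r)) = - real n" .
  then show ?thesis
    by (simp only: integral_edge_lin_stat sum_edge_type_weight) (simp add: algebra_simps)
qed

abbreviation "offspring \<equiv> offspring_same_opp (Suc n) a b"

lemma offspring_compound_poisson: "offspring = compound_poisson_pmf (\<alpha> / real n) edge"
  by (simp add: offspring_same_opp_def compound_poisson_pmf_def)

lemma finite_second_moment_offspring: "finite_second_moment offspring"
  using alpha_pos two_le_n
  by (simp add: offspring_compound_poisson finite_second_moment_compound_poisson finite_second_moment_edge)

lemma integral_offspring_total: "(\<integral>z. lin_stat 1 1 z \<partial>offspring) = \<alpha>"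
  using alpha_pos two_le_n
  by (simp add: offspring_compound_poisson integral_compound_poisson_lin_stat finite_second_moment_edge
      integral_edge_total)

lemma integral_offspring_diff: "(\<integral>z. lin_stat 1 (-1) z \<partial>offspring) = \<beta>"
  using alpha_pos two_le_n
  by (simp add: offspring_compound_poisson integral_compound_poisson_lin_stat finite_second_moment_edge
      integral_edge_diff beta_eq)

definition var_total :: real where "var_total = measure_pmf.variance offspring (lin_stat 1 1)"
definition var_diff :: real where "var_diff = measure_pmf.variance offspring (lin_stat 1 (-1))"

lemma var_total_nonneg: "0 \<le> var_total"
  by (simp add: var_total_def measure_pmf.variance_positive)

lemma var_diff_nonneg: "0 \<le> var_diff"
  by (simp add: var_diff_def measure_pmf.variance_positive)

abbreviation "step \<equiv> gw_step (Suc n) a b"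

lemma step_two_type: "step w = two_type_step offspring w"
proof -
  have "(\<lambda>(x1, x2). (x2, x1)) = (prod.swap :: nat \<times> nat \<Rightarrow> _)"
    by (auto simp: fun_eq_iff)
  then show ?thesis
    by (simp add: gw_step_def two_type_step_def pair_conv_pmf_def)
qed

lemma finite_second_moment_step: "finite_second_moment (step w)"
  by (simp add: step_two_type finite_second_moment_two_type_step finite_second_moment_offspring)

lemma lin_stat_neg: "lin_stat (- 1) 1 = (\<lambda>z. - lin_stat 1 (- 1) z)"
  by (simp add: fun_eq_iff lin_stat_def)

lemma integral_step_total: "(\<integral>z. lin_stat 1 1 z \<partial>step w) = \<alpha> * lin_stat 1 1 w"
  by (simp add: step_two_type integral_two_type_step_lin_stat finite_second_moment_offspring
      integral_offspring_total) (simp add: lin_stat_def algebra_simps)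

lemma integral_step_diff: "(\<integral>z. lin_stat 1 (-1) z \<partial>step w) = \<beta> * lin_stat 1 (-1) w"
  by (simp add: step_two_type integral_two_type_step_lin_stat finite_second_moment_offspring
      integral_offspring_diff lin_stat_neg) (simp add: lin_stat_def algebra_simps)

lemma integral_step_total_square:
  "(\<integral>z. (lin_stat 1 1 z)\<^sup>2 \<partial>step w) = var_total * lin_stat 1 1 w + (\<alpha> * lin_stat 1 1 w)\<^sup>2"
proof -
  have "(\<integral>z. (lin_stat 1 1 z)\<^sup>2 \<partial>step w) = real (fst w) * var_total + real (snd w) * var_total
      + (\<integral>z. lin_stat 1 1 z \<partial>step w)\<^sup>2"
    unfolding step_two_type var_total_def
    by (rule integral_two_type_step_lin_stat_square[OF finite_second_moment_offspring])
  then show ?thesis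
    by (simp add: integral_step_total) (simp add: lin_stat_def algebra_simps)
qed

lemma integral_step_diff_square:
  "(\<integral>z. (lin_stat 1 (-1) z)\<^sup>2 \<partial>step w) = var_diff * lin_stat 1 1 w + (\<beta> * lin_stat 1 (-1) w)\<^sup>2"
proof -
  have "measure_pmf.variance offspring (lin_stat (- 1) 1) = var_diff"
    by (simp add: var_diff_def lin_stat_neg power2_commute diff_minus_eq_add)
  moreover have "(\<integral>z. (lin_stat 1 (-1) z)\<^sup>2 \<partial>step w) =
      real (fst w) * var_diff + real (snd w) * measure_pmf.variance offspring (lin_stat (- 1) 1)
      + (\<integral>z. lin_stat 1 (-1) z \<partial>step w)\<^sup>2"
    unfolding step_two_type var_diff_def
    by (rule integral_two_type_step_lin_stat_square[OF finite_second_moment_offspring])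
  ultimately show ?thesis
    by (simp add: integral_step_diff) (simp add: lin_stat_def algebra_simps)
qed

lemma integrable_step_lin_stat:
  "integrable (step w) (lin_stat c1 c2)" "integrable (step w) (\<lambda>s. (lin_stat c1 c2 s)\<^sup>2)"
  using finite_second_moment_step by (rule integral_lin_stat, rule integral_lin_stat_square)

lemma lin_stat_total_nonneg: "0 \<le> lin_stat 1 1 w"
  by (simp add: lin_stat_def)

lemma abs_lin_stat_le: "\<bar>lin_stat c1 c2 w\<bar> \<le> (\<bar>c1\<bar> + \<bar>c2\<bar>) * lin_stat 1 1 w"
proof -
  have "\<bar>lin_stat c1 c2 w\<bar> \<le> \<bar>c1\<bar> * real (fst w) + \<bar>c2\<bar> * real (snd w)"
    unfolding lin_stat_def by (rule order_trans[OF abs_triangle_ineq]) (simp add: abs_mult)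
  also have "\<dots> \<le> (\<bar>c1\<bar> + \<bar>c2\<bar>) * lin_stat 1 1 w"
    by (simp add: lin_stat_def algebra_simps)
  finally show ?thesis .
qed

lemma integral_step_abs_lin_stat_le:
  "(\<integral>s. \<bar>lin_stat c1 c2 s\<bar> \<partial>step w) \<le> (\<bar>c1\<bar> + \<bar>c2\<bar>) * (\<alpha> * lin_stat 1 1 w)"
proof -
  have "(\<integral>s. \<bar>lin_stat c1 c2 s\<bar> \<partial>step w) \<le> (\<integral>s. (\<bar>c1\<bar> + \<bar>c2\<bar>) * lin_stat 1 1 s \<partial>step w)"
    using integrable_step_lin_stat by (intro integral_mono abs_lin_stat_le) auto
  then show ?thesis
    by (simp add: integral_step_total)
qed

end

section \<open>The spin-count process\<close>

lemma measurable_Pair_count_space: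
  fixes f :: "'a \<Rightarrow> 'b::countable" and g :: "'a \<Rightarrow> 'c::countable"
  assumes [measurable]: "f \<in> M \<rightarrow>\<^sub>M count_space UNIV" "g \<in> M \<rightarrow>\<^sub>M count_space UNIV"
  shows "(\<lambda>x. (f x, g x)) \<in> M \<rightarrow>\<^sub>M count_space UNIV"
proof (subst measurable_count_space_eq2_countable, safe)
  fix p :: "'b \<times> 'c"
  have "(\<lambda>x. (f x, g x)) -` {p} \<inter> space M = {x\<in>space M. f x = fst p \<and> g x = snd p}"
    by (cases p) auto
  also have "\<dots> \<in> sets M"
    by measurable
  finally show "(\<lambda>x. (f x, g x)) -` {p} \<inter> space M \<in> sets M" .
qed auto

lemma nn_integral_countable_rv:
  fixes Z :: "'a \<Rightarrow> 'c::countable"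
  assumes [measurable]: "Z \<in> M \<rightarrow>\<^sub>M count_space UNIV"
  shows "(\<integral>\<^sup>+x. g (Z x) \<partial>M) = (\<integral>\<^sup>+z. g z * emeasure M {x\<in>space M. Z x = z} \<partial>count_space UNIV)"
proof -
  have "(\<integral>\<^sup>+x. g (Z x) \<partial>M) =
      (\<integral>\<^sup>+x. \<integral>\<^sup>+z. g z * indicator {x\<in>space M. Z x = z} x \<partial>count_space UNIV \<partial>M)"
  proof (rule nn_integral_cong)
    fix x assume "x \<in> space M"
    then have "(\<integral>\<^sup>+z. g z * indicator {x\<in>space M. Z x = z} x \<partial>count_space UNIV) =
        (\<integral>\<^sup>+z. g z * indicator {Z x} z \<partial>count_space UNIV)"
      by (intro nn_integral_cong) (auto split: split_indicator)
    then show "g (Z x) = (\<integral>\<^sup>+z. g z * indicator {x\<in>space M. Z x = z} x \<partial>count_space UNIV)"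
      by simp
  qed
  also have "\<dots> = (\<integral>\<^sup>+z. \<integral>\<^sup>+x. g z * indicator {x\<in>space M. Z x = z} x \<partial>M \<partial>count_space UNIV)"
    by (intro nn_integral_count_space_nn_integral) auto
  also have "\<dots> = (\<integral>\<^sup>+z. g z * emeasure M {x\<in>space M. Z x = z} \<partial>count_space UNIV)"
    by (intro nn_integral_cong) (simp add: nn_integral_cmult)
  finally show ?thesis .
qed

locale gw_count_process = gw_hypertree +
  fixes M :: "'w measure" and W :: "nat \<Rightarrow> 'w \<Rightarrow> nat \<times> nat"
  assumes process: "is_gw_count_process (Suc n) a b M W"
begin

sublocale P: prob_space M
  using process by (simp add: is_gw_count_process_def)

lemma measurable_W [measurable]: "W t \<in> M \<rightarrow>\<^sub>M count_space UNIV"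
  using process by (simp add: is_gw_count_process_def)

lemma W_0: "\<omega> \<in> space M \<Longrightarrow> W 0 \<omega> = (1, 0)"
  using process by (simp add: is_gw_count_process_def)

lemma borel_measurable_W [measurable]: "(\<lambda>\<omega>. f (W t \<omega>) :: real) \<in> borel_measurable M"
  using measurable_compose[OF measurable_W, of f borel] by simp

lemma borel_measurable_W_pair [measurable]: "(\<lambda>\<omega>. f (W t \<omega>) (W u \<omega>) :: real) \<in> borel_measurable M"
  using measurable_compose[OF measurable_Pair_count_space[OF measurable_W measurable_W],
      of "\<lambda>p. f (fst p) (snd p)" borel] by simp

lemma W_0_integral: "integrable M (\<lambda>\<omega>. f (W 0 \<omega>)) \<and> (\<integral>\<omega>. f (W 0 \<omega>) \<partial>M) = (f (1, 0) :: real)"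
proof -
  have "integrable M (\<lambda>\<omega>. f (W 0 \<omega>))"
    by (rule integrable_cong_AE_imp[where g="\<lambda>_. f (1, 0)"]) (auto intro!: AE_I2 simp: W_0)
  moreover have "(\<integral>\<omega>. f (W 0 \<omega>) \<partial>M) = (\<integral>\<omega>. f (1, 0) \<partial>M)"
    by (intro Bochner_Integration.integral_cong) (simp_all add: W_0)
  ultimately show ?thesis
    by (simp add: P.prob_space)
qed

definition hist :: "nat \<Rightarrow> 'w \<Rightarrow> (nat \<times> nat) list" where
  "hist t \<omega> = map (\<lambda>k. W k \<omega>) [0..<Suc t]"

lemma hist_eq_iff: "hist t \<omega> = hs \<longleftrightarrow> length hs = Suc t \<and> (\<forall>k\<le>t. W k \<omega> = hs ! k)"
  unfolding hist_def by (auto simp: list_eq_iff_nth_eq less_Suc_eq_le simp del: upt_Suc)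

lemma hist_nth: "k \<le> t \<Longrightarrow> hist t \<omega> ! k = W k \<omega>"
  unfolding hist_def by (simp add: less_Suc_eq_le del: upt_Suc)

lemma measurable_hist [measurable]: "hist t \<in> M \<rightarrow>\<^sub>M count_space UNIV"
proof (subst measurable_count_space_eq2_countable, safe)
  fix hs :: "(nat \<times> nat) list"
  have "hist t -` {hs} \<inter> space M =
      (if length hs = Suc t then {\<omega>\<in>space M. \<forall>k\<in>{..t}. W k \<omega> = hs ! k} else {})"
    by (rule set_eqI) (auto simp: hist_eq_iff)
  also have "\<dots> \<in> sets M"
    by (cases "length hs = Suc t") (simp_all, measurable)
  finally show "hist t -` {hs} \<inter> space M \<in> sets M" .
qed auto

lemma borel_measurable_hist [measurable]: "(\<lambda>\<omega>. f (hist t \<omega>) :: real) \<in> borel_measurable M"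
  using measurable_compose[OF measurable_hist, of f borel] by simp

lemma integrable_indicator_hist:
  "integrable M X \<Longrightarrow> integrable M (\<lambda>\<omega>. indicator B (hist t \<omega>) * X \<omega> :: real)"
  by (rule Bochner_Integration.integrable_bound[of M X]) (auto split: split_indicator)

lemma emeasure_hist_next:
  "emeasure M {\<omega>\<in>space M. hist t \<omega> = hs \<and> W (Suc t) \<omega> = s} =
   emeasure M {\<omega>\<in>space M. hist t \<omega> = hs} * ennreal (pmf (step (hs ! t)) s)"
proof (cases "length hs = Suc t")
  case True
  have "measure M {\<omega>\<in>space M. (\<forall>k\<le>t. W k \<omega> = hs ! k) \<and> W (Suc t) \<omega> = s} =
      measure M {\<omega>\<in>space M. \<forall>k\<le>t. W k \<omega> = hs ! k} * pmf (step (hs ! t)) s"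
    using process unfolding is_gw_count_process_def by blast
  moreover from True have "{\<omega>\<in>space M. hist t \<omega> = hs \<and> W (Suc t) \<omega> = s} =
      {\<omega>\<in>space M. (\<forall>k\<le>t. W k \<omega> = hs ! k) \<and> W (Suc t) \<omega> = s}"
    "{\<omega>\<in>space M. hist t \<omega> = hs} = {\<omega>\<in>space M. \<forall>k\<le>t. W k \<omega> = hs ! k}"
    by (auto simp: hist_eq_iff)
  ultimately show ?thesis
    by (simp add: P.emeasure_eq_measure ennreal_mult)
qed (simp add: hist_eq_iff)

lemma nn_integral_hist_next:
  "(\<integral>\<^sup>+\<omega>. g (hist t \<omega>) (W (Suc t) \<omega>) \<partial>M) = (\<integral>\<^sup>+\<omega>. \<integral>\<^sup>+s. g (hist t \<omega>) s \<partial>step (W t \<omega>) \<partial>M)"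
proof -
  have "(\<integral>\<^sup>+\<omega>. g (hist t \<omega>) (W (Suc t) \<omega>) \<partial>M) = (\<integral>\<^sup>+p. g (fst p) (snd p) *
      emeasure M {\<omega>\<in>space M. (hist t \<omega>, W (Suc t) \<omega>) = p} \<partial>count_space UNIV)"
    using nn_integral_countable_rv[of "\<lambda>\<omega>. (hist t \<omega>, W (Suc t) \<omega>)" M "\<lambda>p. g (fst p) (snd p)"]
    by (simp add: measurable_Pair_count_space)
  also have "\<dots> = (\<integral>\<^sup>+hs. \<integral>\<^sup>+s. g hs s * (emeasure M {\<omega>\<in>space M. hist t \<omega> = hs} *
      ennreal (pmf (step (hs ! t)) s)) \<partial>count_space UNIV \<partial>count_space UNIV)"
    by (subst nn_integral_fst_count_space[symmetric]) (simp add: emeasure_hist_next)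
  also have "\<dots> = (\<integral>\<^sup>+hs. (\<integral>\<^sup>+s. g hs s \<partial>step (hs ! t)) *
      emeasure M {\<omega>\<in>space M. hist t \<omega> = hs} \<partial>count_space UNIV)"
    by (simp add: nn_integral_measure_pmf flip: nn_integral_multc) (simp only: mult_ac)
  also have "\<dots> = (\<integral>\<^sup>+\<omega>. \<integral>\<^sup>+s. g (hist t \<omega>) s \<partial>step (hist t \<omega> ! t) \<partial>M)"
    by (rule nn_integral_countable_rv[symmetric]) simp
  finally show ?thesis
    by (simp add: hist_nth)
qed

lemma integral_hist_next_nonneg:
  fixes F :: "nat \<times> nat \<Rightarrow> nat \<times> nat \<Rightarrow> real"
  assumes nonneg: "\<And>w s. 0 \<le> F w s" and int_step: "\<And>w. integrable (step w) (F w)"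
    and int: "integrable M (\<lambda>\<omega>. \<integral>s. F (W t \<omega>) s \<partial>step (W t \<omega>))"
  shows "integrable M (\<lambda>\<omega>. F (W t \<omega>) (W (Suc t) \<omega>))"
    and "(\<integral>\<omega>. indicator B (hist t \<omega>) * F (W t \<omega>) (W (Suc t) \<omega>) \<partial>M) =
      (\<integral>\<omega>. indicator B (hist t \<omega>) * (\<integral>s. F (W t \<omega>) s \<partial>step (W t \<omega>)) \<partial>M)"
proof -
  have inner: "(\<integral>\<^sup>+s. ennreal (F w s) \<partial>step w) = ennreal (\<integral>s. F w s \<partial>step w)" for w
    using int_step nonneg by (intro nn_integral_eq_integral) auto
  have nn: "(\<integral>\<^sup>+\<omega>. ennreal (indicator B (hist t \<omega>) * F (W t \<omega>) (W (Suc t) \<omega>)) \<partial>M) =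
      (\<integral>\<^sup>+\<omega>. ennreal (indicator B (hist t \<omega>) * (\<integral>s. F (W t \<omega>) s \<partial>step (W t \<omega>))) \<partial>M)" for B
  proof -
    have "(\<integral>\<^sup>+\<omega>. ennreal (indicator B (hist t \<omega>) * F (W t \<omega>) (W (Suc t) \<omega>)) \<partial>M) =
        (\<integral>\<^sup>+\<omega>. \<integral>\<^sup>+s. ennreal (indicator B (hist t \<omega>) * F (W t \<omega>) s) \<partial>step (W t \<omega>) \<partial>M)"
      using nn_integral_hist_next[of "\<lambda>hs s. ennreal (indicator B hs * F (hs ! t) s)" t]
      by (simp add: hist_nth)
    also have "\<dots> = (\<integral>\<^sup>+\<omega>. ennreal (indicator B (hist t \<omega>) * (\<integral>s. F (W t \<omega>) s \<partial>step (W t \<omega>))) \<partial>M)"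
      by (intro nn_integral_cong) (simp add: inner split: split_indicator)
    finally show ?thesis .
  qed
  have nonneg_int: "0 \<le> (\<integral>s. F w s \<partial>step w)" for w
    using nonneg by (intro integral_nonneg_AE) auto
  have "(\<integral>\<^sup>+\<omega>. ennreal (\<integral>s. F (W t \<omega>) s \<partial>step (W t \<omega>)) \<partial>M) < \<infinity>"
    using int nonneg_int by (simp add: nn_integral_eq_integral)
  then show "integrable M (\<lambda>\<omega>. F (W t \<omega>) (W (Suc t) \<omega>))"
    using nn[of UNIV] nonneg by (intro integrableI_nonneg) auto
  have "(\<integral>\<omega>. indicator B (hist t \<omega>) * F (W t \<omega>) (W (Suc t) \<omega>) \<partial>M) =
      enn2real (\<integral>\<^sup>+\<omega>. ennreal (indicator B (hist t \<omega>) * F (W t \<omega>) (W (Suc t) \<omega>)) \<partial>M)"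
    using nonneg by (intro integral_eq_nn_integral) auto
  also have "\<dots> = (\<integral>\<omega>. indicator B (hist t \<omega>) * (\<integral>s. F (W t \<omega>) s \<partial>step (W t \<omega>)) \<partial>M)"
    using nonneg_int by (simp only: nn) (intro integral_eq_nn_integral[symmetric]; simp)
  finally show "(\<integral>\<omega>. indicator B (hist t \<omega>) * F (W t \<omega>) (W (Suc t) \<omega>) \<partial>M) =
      (\<integral>\<omega>. indicator B (hist t \<omega>) * (\<integral>s. F (W t \<omega>) s \<partial>step (W t \<omega>)) \<partial>M)" .
qed

lemma integrable_integral_step_le:
  fixes F :: "nat \<times> nat \<Rightarrow> nat \<times> nat \<Rightarrow> real" and H :: "nat \<times> nat \<Rightarrow> real"
  assumes nonneg: "\<And>w s. 0 \<le> F w s" and bound: "\<And>w. (\<integral>s. F w s \<partial>step w) \<le> H w"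
    and int_H: "integrable M (\<lambda>\<omega>. H (W t \<omega>))"
  shows "integrable M (\<lambda>\<omega>. \<integral>s. F (W t \<omega>) s \<partial>step (W t \<omega>))"
proof (rule Bochner_Integration.integrable_bound[OF int_H])
  have "0 \<le> (\<integral>s. F w s \<partial>step w)" for w
    using nonneg by (intro integral_nonneg_AE) auto
  then show "AE \<omega> in M. norm (\<integral>s. F (W t \<omega>) s \<partial>step (W t \<omega>)) \<le> norm (H (W t \<omega>))"
    using bound by (intro AE_I2) (metis abs_of_nonneg order_trans abs_ge_self real_norm_def)
qed simp

lemma integral_hist_next:
  fixes F :: "nat \<times> nat \<Rightarrow> nat \<times> nat \<Rightarrow> real" and H :: "nat \<times> nat \<Rightarrow> real"
  assumes int_step: "\<And>w. integrable (step w) (F w)"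
    and bound: "\<And>w. (\<integral>s. \<bar>F w s\<bar> \<partial>step w) \<le> H w" and int_H: "integrable M (\<lambda>\<omega>. H (W t \<omega>))"
  shows "integrable M (\<lambda>\<omega>. F (W t \<omega>) (W (Suc t) \<omega>))"
    and "(\<integral>\<omega>. indicator B (hist t \<omega>) * F (W t \<omega>) (W (Suc t) \<omega>) \<partial>M) =
      (\<integral>\<omega>. indicator B (hist t \<omega>) * (\<integral>s. F (W t \<omega>) s \<partial>step (W t \<omega>)) \<partial>M)"
proof -
  define Fp where "Fp w s = max (F w s) 0" for w s
  define Fn where "Fn w s = max (- F w s) 0" for w s
  have F_eq: "F w s = Fp w s - Fn w s" for w s
    by (simp add: Fp_def Fn_def)
  have int_pn: "integrable (step w) (Fp w)" "integrable (step w) (Fn w)" for w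
    using int_step[of w] unfolding Fp_def Fn_def by (auto intro!: integrable_max)
  have pn_nonneg: "0 \<le> Fp w s" "0 \<le> Fn w s" for w s
    by (simp_all add: Fp_def Fn_def)
  have le_abs: "(\<integral>s. Fp w s \<partial>step w) \<le> (\<integral>s. \<bar>F w s\<bar> \<partial>step w)"
    "(\<integral>s. Fn w s \<partial>step w) \<le> (\<integral>s. \<bar>F w s\<bar> \<partial>step w)" for w
    by (rule integral_mono[OF int_pn(1) integrable_abs[OF int_step]], simp add: Fp_def,
        rule integral_mono[OF int_pn(2) integrable_abs[OF int_step]], simp add: Fn_def)
  have "(\<integral>s. Fp w s \<partial>step w) \<le> H w" "(\<integral>s. Fn w s \<partial>step w) \<le> H w" for w
    using le_abs[of w] bound[of w] by linarith+
  then have int_M: "integrable M (\<lambda>\<omega>. \<integral>s. Fp (W t \<omega>) s \<partial>step (W t \<omega>))"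
    "integrable M (\<lambda>\<omega>. \<integral>s. Fn (W t \<omega>) s \<partial>step (W t \<omega>))"
    using pn_nonneg int_H by (blast intro: integrable_integral_step_le)+
  note Pos = integral_hist_next_nonneg[of Fp, OF pn_nonneg(1) int_pn(1) int_M(1)]
  note Neg = integral_hist_next_nonneg[of Fn, OF pn_nonneg(2) int_pn(2) int_M(2)]
  show "integrable M (\<lambda>\<omega>. F (W t \<omega>) (W (Suc t) \<omega>))"
    using Pos(1) Neg(1) by (simp add: F_eq)
  have "(\<integral>\<omega>. indicator B (hist t \<omega>) * F (W t \<omega>) (W (Suc t) \<omega>) \<partial>M) =
      (\<integral>\<omega>. indicator B (hist t \<omega>) * Fp (W t \<omega>) (W (Suc t) \<omega>) \<partial>M)
      - (\<integral>\<omega>. indicator B (hist t \<omega>) * Fn (W t \<omega>) (W (Suc t) \<omega>) \<partial>M)"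
    using integrable_indicator_hist[OF Pos(1)] integrable_indicator_hist[OF Neg(1)]
    by (simp add: F_eq right_diff_distrib)
  also have "\<dots> = (\<integral>\<omega>. indicator B (hist t \<omega>) * (\<integral>s. F (W t \<omega>) s \<partial>step (W t \<omega>)) \<partial>M)"
    using integrable_indicator_hist[OF int_M(1)] integrable_indicator_hist[OF int_M(2)] int_pn
    by (simp add: Pos(2) Neg(2) F_eq right_diff_distrib)
  finally show "(\<integral>\<omega>. indicator B (hist t \<omega>) * F (W t \<omega>) (W (Suc t) \<omega>) \<partial>M) =
      (\<integral>\<omega>. indicator B (hist t \<omega>) * (\<integral>s. F (W t \<omega>) s \<partial>step (W t \<omega>)) \<partial>M)" .
qed

abbreviation "G \<equiv> gen_filtration M W"

lemma sets_gen_filtration: "sets (G t) = sigma_sets (space M) {W k -` A \<inter> space M | k A. k \<le> t}"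
  unfolding gen_filtration_def by (rule sets_measure_of) auto

lemma space_gen_filtration: "space (G t) = space M"
  unfolding gen_filtration_def by (rule space_measure_of_conv)

lemma gen_filtration_hist:
  assumes "A \<in> sets (G t)"
  obtains B where "A = hist t -` B \<inter> space M"
proof -
  let ?V = "vimage_algebra (space M) (hist t) (count_space UNIV)"
  have V: "sets ?V = {hist t -` B \<inter> space M | B. B \<in> UNIV}"
    by (subst sets_vimage_algebra2) auto
  have "{W k -` A \<inter> space M | k A. k \<le> t} \<subseteq> sets ?V"
  proof
    fix X assume "X \<in> {W k -` A \<inter> space M | k A. k \<le> t}"
    then obtain k A where "k \<le> t" "X = W k -` A \<inter> space M"
      by auto
    then have "X = hist t -` {hs. hs ! k \<in> A} \<inter> space M"
      by (auto simp: hist_nth)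
    then show "X \<in> sets ?V"
      unfolding V by blast
  qed
  then have "sigma_sets (space M) {W k -` A \<inter> space M | k A. k \<le> t} \<subseteq> sets ?V"
    using sigma_algebra.sigma_sets_subset[OF sets.sigma_algebra_axioms[of ?V]] by simp
  then show ?thesis
    using assms that unfolding sets_gen_filtration V by blast
qed

lemma subalgebra_gen_filtration: "subalgebra M (G t)"
proof -
  have "A \<in> sets M" if "A \<in> sets (G t)" for A
    using that by (elim gen_filtration_hist) (simp add: measurable_sets[OF measurable_hist])
  then show ?thesis
    by (auto simp: subalgebra_def space_gen_filtration)
qed

lemma sets_gen_filtration_mono: "sets (G t) \<subseteq> sets (G (Suc t))"
  unfolding sets_gen_filtration by (intro sigma_sets_mono') (auto intro: le_SucI)

lemma borel_measurable_gen_filtration: "(\<lambda>\<omega>. f (W t \<omega>) :: real) \<in> borel_measurable (G t)"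
proof -
  have "W t \<in> G t \<rightarrow>\<^sub>M count_space UNIV"
  proof (subst measurable_count_space_eq2_countable, safe)
    fix s
    have "W t -` {s} \<inter> space M \<in> {W k -` A \<inter> space M | k A. k \<le> t}"
      by blast
    then show "W t -` {s} \<inter> space (G t) \<in> sets (G t)"
      unfolding space_gen_filtration sets_gen_filtration by auto
  qed auto
  then show ?thesis
    using measurable_compose[of "W t" "G t" "count_space UNIV" f borel] by simp
qed

text \<open>Every event of G t is determined by the history up to t, so the martingale property reduces
  to integrals against indicators of histories.\<close>
lemma martingale_of_hist:
  fixes X :: "nat \<Rightarrow> nat \<times> nat \<Rightarrow> real"
  assumes int: "\<And>t. integrable M (\<lambda>\<omega>. X t (W t \<omega>))"
    and eq: "\<And>t B. (\<integral>\<omega>. indicator B (hist t \<omega>) * X (Suc t) (W (Suc t) \<omega>) \<partial>M) =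
      (\<integral>\<omega>. indicator B (hist t \<omega>) * X t (W t \<omega>) \<partial>M)"
  shows "martingale M G (\<lambda>t \<omega>. X t (W t \<omega>))"
  unfolding martingale_def
proof (intro allI conjI)
  fix t
  interpret S: finite_measure_subalgebra M "G t"
    by unfold_locales (rule subalgebra_gen_filtration)
  show "AE \<omega> in M. real_cond_exp M (G t) (\<lambda>\<omega>. X (Suc t) (W (Suc t) \<omega>)) \<omega> = X t (W t \<omega>)"
  proof (rule S.real_cond_exp_charact)
    fix A assume "A \<in> sets (G t)"
    then obtain B where A: "A = hist t -` B \<inter> space M"
      by (elim gen_filtration_hist)
    have "(\<integral>\<omega>\<in>A. Y \<omega> \<partial>M) = (\<integral>\<omega>. indicator B (hist t \<omega>) * Y \<omega> \<partial>M)" for Y :: "'w \<Rightarrow> real"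
      unfolding set_lebesgue_integral_def A
      by (rule Bochner_Integration.integral_cong) (auto split: split_indicator)
    then show "(\<integral>\<omega>\<in>A. X (Suc t) (W (Suc t) \<omega>) \<partial>M) = (\<integral>\<omega>\<in>A. X t (W t \<omega>) \<partial>M)"
      by (simp add: eq)
  qed (auto simp: int borel_measurable_gen_filtration)
qed (auto simp: subalgebra_gen_filtration sets_gen_filtration_mono int borel_measurable_gen_filtration)

lemma integrable_expectation_total:
  "integrable M (\<lambda>\<omega>. lin_stat 1 1 (W t \<omega>)) \<and> (\<integral>\<omega>. lin_stat 1 1 (W t \<omega>) \<partial>M) = \<alpha> ^ t"
proof (induction t)
  case 0
  then show ?case
    using W_0_integral[of "lin_stat 1 1"] by (simp add: lin_stat_def)
next
  case (Suc t)
  have "(\<integral>s. \<bar>lin_stat 1 1 s\<bar> \<partial>step w) \<le> \<alpha> * lin_stat 1 1 w" for w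
    by (simp add: lin_stat_total_nonneg integral_step_total)
  note next_gen = integral_hist_next[where F="\<lambda>w s. lin_stat 1 1 s" and H="\<lambda>w. \<alpha> * lin_stat 1 1 w"
      and t=t, OF integrable_step_lin_stat(1) this]
  show ?case
    using Suc next_gen(1) next_gen(2)[of UNIV] by (simp add: integral_step_total)
qed

lemma integrable_total: "integrable M (\<lambda>\<omega>. lin_stat 1 1 (W t \<omega>))"
  using integrable_expectation_total by blast

end

lemma power_square_commute: "(y\<^sup>2) ^ t = (y ^ t)\<^sup>2" for y :: real
  by (simp flip: power_mult) (simp add: mult.commute)

text \<open>The instances used below are the total count (c1 = c2 = 1, \<mu> = \<alpha>) and the spin difference
  (c1 = 1, c2 = -1, \<mu> = \<beta>).\<close>
locale gw_lin_stat = gw_count_process +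
  fixes c1 c2 \<mu> C :: real
  assumes step_mean: "\<And>w. (\<integral>s. lin_stat c1 c2 s \<partial>step w) = \<mu> * lin_stat c1 c2 w"
    and step_square: "\<And>w. (\<integral>s. (lin_stat c1 c2 s)\<^sup>2 \<partial>step w) = C * lin_stat 1 1 w + (\<mu> * lin_stat c1 c2 w)\<^sup>2"
    and C_nonneg: "0 \<le> C"
begin

lemma integrable_lin_stat: "integrable M (\<lambda>\<omega>. lin_stat c1 c2 (W t \<omega>))"
  by (rule Bochner_Integration.integrable_bound[OF integrable_mult_right[OF integrable_total,
        of "\<bar>c1\<bar> + \<bar>c2\<bar>" t]])
    (auto intro!: AE_I2 order_trans[OF abs_lin_stat_le abs_ge_self])

lemma integral_hist_lin_stat_next:
  "(\<integral>\<omega>. indicator B (hist t \<omega>) * lin_stat c1 c2 (W (Suc t) \<omega>) \<partial>M) =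
   \<mu> * (\<integral>\<omega>. indicator B (hist t \<omega>) * lin_stat c1 c2 (W t \<omega>) \<partial>M)"
  using integral_hist_next(2)[where F="\<lambda>w s. lin_stat c1 c2 s"
      and H="\<lambda>w. (\<bar>c1\<bar> + \<bar>c2\<bar>) * (\<alpha> * lin_stat 1 1 w)" and t=t and B=B,
      OF integrable_step_lin_stat(1) integral_step_abs_lin_stat_le]
    integrable_total[of t]
  by (simp add: step_mean mult.left_commute)

lemma expectation_lin_stat: "(\<integral>\<omega>. lin_stat c1 c2 (W t \<omega>) \<partial>M) = \<mu> ^ t * c1"
proof (induction t)
  case 0
  then show ?case
    using W_0_integral[of "lin_stat c1 c2"] by (simp add: lin_stat_def)
next
  case (Suc t)
  then show ?case
    using integral_hist_lin_stat_next[of UNIV t] by simp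
qed

lemma martingale_lin_stat:
  assumes "\<mu> \<noteq> 0"
  shows "martingale M G (\<lambda>t \<omega>. lin_stat c1 c2 (W t \<omega>) / \<mu> ^ t)"
proof (rule martingale_of_hist[where X="\<lambda>t w. lin_stat c1 c2 w / \<mu> ^ t"])
  fix t B
  show "(\<integral>\<omega>. indicator B (hist t \<omega>) * (lin_stat c1 c2 (W (Suc t) \<omega>) / \<mu> ^ Suc t) \<partial>M) =
      (\<integral>\<omega>. indicator B (hist t \<omega>) * (lin_stat c1 c2 (W t \<omega>) / \<mu> ^ t) \<partial>M)"
    using integral_hist_lin_stat_next[of B t] assms by (simp add: times_divide_eq_right)
qed (simp add: integrable_lin_stat)

lemma integral_step_abs_square:
  "(\<integral>s. \<bar>(lin_stat c1 c2 s)\<^sup>2\<bar> \<partial>step w) = C * lin_stat 1 1 w + (\<mu> * lin_stat c1 c2 w)\<^sup>2"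
  by (simp add: step_square)

lemma integrable_lin_stat_square: "integrable M (\<lambda>\<omega>. (lin_stat c1 c2 (W t \<omega>))\<^sup>2)"
proof (induction t)
  case 0
  then show ?case
    using W_0_integral[of "\<lambda>w. (lin_stat c1 c2 w)\<^sup>2"] by simp
next
  case (Suc t)
  have "integrable M (\<lambda>\<omega>. C * lin_stat 1 1 (W t \<omega>) + (\<mu> * lin_stat c1 c2 (W t \<omega>))\<^sup>2)"
    using Suc integrable_total[of t] by (simp add: power_mult_distrib)
  then show ?case
    by (rule integral_hist_next(1)[OF integrable_step_lin_stat(2) integral_step_abs_square[THEN eq_refl]])
qed

lemma expectation_lin_stat_square_Suc:
  "(\<integral>\<omega>. (lin_stat c1 c2 (W (Suc t) \<omega>))\<^sup>2 \<partial>M) =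
   \<mu>\<^sup>2 * (\<integral>\<omega>. (lin_stat c1 c2 (W t \<omega>))\<^sup>2 \<partial>M) + C * \<alpha> ^ t"
proof -
  have "integrable M (\<lambda>\<omega>. C * lin_stat 1 1 (W t \<omega>) + (\<mu> * lin_stat c1 c2 (W t \<omega>))\<^sup>2)"
    using integrable_lin_stat_square[of t] integrable_total[of t] by (simp add: power_mult_distrib)
  note next_gen = integral_hist_next(2)[where B=UNIV,
      OF integrable_step_lin_stat(2) integral_step_abs_square[THEN eq_refl] this]
  then show ?thesis
    using integrable_lin_stat_square[of t] integrable_total[of t] integrable_expectation_total[of t]
    by (simp add: step_square power_mult_distrib)
qed

lemma expectation_increment_square:
  "(\<integral>\<omega>. (lin_stat c1 c2 (W (Suc t) \<omega>) - \<mu> * lin_stat c1 c2 (W t \<omega>))\<^sup>2 \<partial>M) = C * \<alpha> ^ t"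
proof -
  have step_var: "(\<integral>s. (lin_stat c1 c2 s - \<mu> * lin_stat c1 c2 w)\<^sup>2 \<partial>step w) = C * lin_stat 1 1 w" for w
    using integrable_step_lin_stat[of w c1 c2]
    by (simp add: power2_diff step_square step_mean measure_pmf.prob_space) (simp add: power2_eq_square)
  have int_step: "integrable (step w) (\<lambda>s. (lin_stat c1 c2 s - \<mu> * lin_stat c1 c2 w)\<^sup>2)" for w
    using integrable_step_lin_stat[of w c1 c2] by (simp add: power2_diff)
  have "(\<integral>s. \<bar>(lin_stat c1 c2 s - \<mu> * lin_stat c1 c2 w)\<^sup>2\<bar> \<partial>step w) \<le> C * lin_stat 1 1 w" for w
    by (simp add: step_var)
  note next_gen = integral_hist_next(2)[where F="\<lambda>w s. (lin_stat c1 c2 s - \<mu> * lin_stat c1 c2 w)\<^sup>2"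
      and H="\<lambda>w. C * lin_stat 1 1 w" and t=t and B=UNIV, OF int_step this]
  then show ?thesis
    using integrable_total[of t] integrable_expectation_total[of t] by (simp add: step_var)
qed

lemma expectation_normalized_square:
  assumes "\<mu> \<noteq> 0"
  shows "(\<integral>\<omega>. (lin_stat c1 c2 (W t \<omega>) / \<mu> ^ t)\<^sup>2 \<partial>M) = c1\<^sup>2 + C / \<mu>\<^sup>2 * (\<Sum>k<t. (\<alpha> / \<mu>\<^sup>2) ^ k)"
proof (induction t)
  case 0
  then show ?case
    using W_0_integral[of "\<lambda>w. (lin_stat c1 c2 w)\<^sup>2"] by (simp add: lin_stat_def)
next
  case (Suc t)
  have "(\<integral>\<omega>. (lin_stat c1 c2 (W (Suc t) \<omega>) / \<mu> ^ Suc t)\<^sup>2 \<partial>M) =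
      (\<mu>\<^sup>2 * (\<integral>\<omega>. (lin_stat c1 c2 (W t \<omega>))\<^sup>2 \<partial>M) + C * \<alpha> ^ t) / (\<mu>\<^sup>2 * (\<mu> ^ t)\<^sup>2)"
    by (simp add: power_divide expectation_lin_stat_square_Suc power_mult_distrib)
  also have "\<dots> = (\<integral>\<omega>. (lin_stat c1 c2 (W t \<omega>) / \<mu> ^ t)\<^sup>2 \<partial>M) + C / \<mu>\<^sup>2 * (\<alpha> / \<mu>\<^sup>2) ^ t"
    using assms by (simp add: power_divide power_square_commute field_simps)
  finally show ?case
    using Suc by (simp add: algebra_simps)
qed

lemma expectation_normalized_square_le:
  assumes "\<alpha> < \<mu>\<^sup>2"
  shows "(\<integral>\<omega>. (lin_stat c1 c2 (W t \<omega>) / \<mu> ^ t)\<^sup>2 \<partial>M) \<le> c1\<^sup>2 + C / \<mu>\<^sup>2 / (1 - \<alpha> / \<mu>\<^sup>2)"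
proof -
  have "0 < \<mu>\<^sup>2"
    using assms alpha_pos by linarith
  then have ratio: "0 \<le> \<alpha> / \<mu>\<^sup>2" "\<alpha> / \<mu>\<^sup>2 < 1"
    using assms alpha_pos by auto
  have "(\<Sum>k<t. (\<alpha> / \<mu>\<^sup>2) ^ k) \<le> (\<Sum>k. (\<alpha> / \<mu>\<^sup>2) ^ k)"
    using ratio by (intro sum_le_suminf summable_geometric) auto
  also have "\<dots> = 1 / (1 - \<alpha> / \<mu>\<^sup>2)"
    using ratio by (simp add: suminf_geometric)
  finally have "C / \<mu>\<^sup>2 * (\<Sum>k<t. (\<alpha> / \<mu>\<^sup>2) ^ k) \<le> C / \<mu>\<^sup>2 * (1 / (1 - \<alpha> / \<mu>\<^sup>2))"
    using C_nonneg by (intro mult_left_mono) auto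
  moreover have "\<mu> \<noteq> 0"
    using \<open>0 < \<mu>\<^sup>2\<close> by auto
  ultimately show ?thesis
    by (simp add: expectation_normalized_square)
qed

lemma expectation_normalized_increment_square:
  assumes "\<mu> \<noteq> 0"
  shows "(\<integral>\<omega>. (lin_stat c1 c2 (W (Suc t) \<omega>) / \<mu> ^ Suc t - lin_stat c1 c2 (W t \<omega>) / \<mu> ^ t)\<^sup>2 \<partial>M) =
    C / \<mu>\<^sup>2 * (\<alpha> / \<mu>\<^sup>2) ^ t"
proof -
  have "(\<lambda>\<omega>. (lin_stat c1 c2 (W (Suc t) \<omega>) / \<mu> ^ Suc t - lin_stat c1 c2 (W t \<omega>) / \<mu> ^ t)\<^sup>2) =
      (\<lambda>\<omega>. (lin_stat c1 c2 (W (Suc t) \<omega>) - \<mu> * lin_stat c1 c2 (W t \<omega>))\<^sup>2 / (\<mu> ^ Suc t)\<^sup>2)"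
    using assms by (simp add: fun_eq_iff power_divide field_simps)
  then show ?thesis
    using assms by (simp add: expectation_increment_square power_divide power_square_commute field_simps
        power_mult_distrib)
qed

end

section \<open>Uniform integrability and L^2 limits\<close>

lemma truncated_abs_le_square_div:
  fixes x c :: real
  assumes "0 < c"
  shows "(if c \<le> \<bar>x\<bar> then \<bar>x\<bar> else 0) \<le> x\<^sup>2 / c"
proof (cases "c \<le> \<bar>x\<bar>")
  case True
  then have "\<bar>x\<bar> * c \<le> \<bar>x\<bar> * \<bar>x\<bar>"
    by (intro mult_left_mono) auto
  then show ?thesis
    using True assms by (simp add: pos_le_divide_eq power2_eq_square abs_mult_self_eq)
qed (use assms in auto)

lemma uniformly_integrable_of_L2_bounded:
  fixes X :: "nat \<Rightarrow> 'a \<Rightarrow> real"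
  assumes int: "\<And>t. integrable M (X t)" and int2: "\<And>t. integrable M (\<lambda>\<omega>. (X t \<omega>)\<^sup>2)"
    and bound: "\<And>t. (\<integral>\<omega>. (X t \<omega>)\<^sup>2 \<partial>M) \<le> B"
  shows "uniformly_integrable M X"
  unfolding uniformly_integrable_def
proof (intro conjI allI impI int)
  fix \<epsilon> :: real assume "0 < \<epsilon>"
  define c where "c = (\<bar>B\<bar> + 1) / \<epsilon>"
  have c: "0 < c"
    using \<open>0 < \<epsilon>\<close> by (simp add: c_def add_pos_nonneg)
  show "\<exists>K. \<forall>t. (\<integral>\<omega>. (if \<bar>X t \<omega>\<bar> \<ge> K then \<bar>X t \<omega>\<bar> else 0) \<partial>M) \<le> \<epsilon>"
  proof (intro exI allI)
    fix t
    have [measurable]: "X t \<in> borel_measurable M"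
      using int by auto
    have "(\<integral>\<omega>. (if \<bar>X t \<omega>\<bar> \<ge> c then \<bar>X t \<omega>\<bar> else 0) \<partial>M) \<le> (\<integral>\<omega>. (X t \<omega>)\<^sup>2 / c \<partial>M)"
    proof (rule integral_mono)
      show "integrable M (\<lambda>\<omega>. if \<bar>X t \<omega>\<bar> \<ge> c then \<bar>X t \<omega>\<bar> else 0)"
        by (rule Bochner_Integration.integrable_bound[OF int[of t]]) auto
    qed (use int2 c truncated_abs_le_square_div in auto)
    also have "\<dots> \<le> B / c"
      using bound[of t] c by (simp add: divide_right_mono)
    also have "\<dots> = \<epsilon> * (B / (\<bar>B\<bar> + 1))"
      using \<open>0 < \<epsilon>\<close> by (simp add: c_def add_pos_nonneg field_simps)
    also have "\<dots> \<le> \<epsilon>"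
      using \<open>0 < \<epsilon>\<close> by (simp add: add_pos_nonneg divide_le_eq) linarith
    finally show "(\<integral>\<omega>. (if \<bar>X t \<omega>\<bar> \<ge> c then \<bar>X t \<omega>\<bar> else 0) \<partial>M) \<le> \<epsilon>" .
  qed
qed

lemma Cauchy_Schwarz_suminf:
  fixes a b :: "nat \<Rightarrow> real"
  assumes "summable (\<lambda>k. (a k)\<^sup>2)" "summable (\<lambda>k. (b k)\<^sup>2)" "summable (\<lambda>k. a k * b k)"
  shows "(\<Sum>k. a k * b k)\<^sup>2 \<le> (\<Sum>k. (a k)\<^sup>2) * (\<Sum>k. (b k)\<^sup>2)"
proof (rule LIMSEQ_le_const2)
  show "(\<lambda>N. (\<Sum>k<N. a k * b k)\<^sup>2) \<longlonglongrightarrow> (\<Sum>k. a k * b k)\<^sup>2"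
    by (intro tendsto_power summable_LIMSEQ assms)
  show "\<exists>N0. \<forall>N\<ge>N0. (\<Sum>k<N. a k * b k)\<^sup>2 \<le> (\<Sum>k. (a k)\<^sup>2) * (\<Sum>k. (b k)\<^sup>2)"
  proof (intro exI allI impI)
    fix N :: nat
    have "(\<Sum>k<N. a k * b k)\<^sup>2 \<le> (\<Sum>k<N. (a k)\<^sup>2) * (\<Sum>k<N. (b k)\<^sup>2)"
      by (rule Cauchy_Schwarz_ineq_sum)
    also have "\<dots> \<le> (\<Sum>k. (a k)\<^sup>2) * (\<Sum>k. (b k)\<^sup>2)"
      using assms by (intro mult_mono sum_le_suminf suminf_nonneg sum_nonneg) auto
    finally show "(\<Sum>k<N. a k * b k)\<^sup>2 \<le> (\<Sum>k. (a k)\<^sup>2) * (\<Sum>k. (b k)\<^sup>2)" .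
  qed
qed

lemma (in prob_space) AE_summable_of_summable_integral:
  fixes f :: "nat \<Rightarrow> 'a \<Rightarrow> real"
  assumes int: "\<And>k. integrable M (f k)" and nonneg: "\<And>k \<omega>. 0 \<le> f k \<omega>"
    and summable: "summable (\<lambda>k. \<integral>\<omega>. f k \<omega> \<partial>M)"
  shows "AE \<omega> in M. summable (\<lambda>k. f k \<omega>)"
proof -
  have [measurable]: "f k \<in> borel_measurable M" for k
    using int by auto
  have "(\<integral>\<^sup>+\<omega>. (\<Sum>k. ennreal (f k \<omega>)) \<partial>M) = (\<Sum>k. \<integral>\<^sup>+\<omega>. ennreal (f k \<omega>) \<partial>M)"
    by (rule nn_integral_suminf) auto
  also have "\<dots> = (\<Sum>k. ennreal (\<integral>\<omega>. f k \<omega> \<partial>M))"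
    using int nonneg by (intro suminf_cong nn_integral_eq_integral) auto
  also have "\<dots> = ennreal (\<Sum>k. \<integral>\<omega>. f k \<omega> \<partial>M)"
    using summable nonneg by (intro suminf_ennreal2 integral_nonneg_AE) auto
  finally have "(\<integral>\<^sup>+\<omega>. (\<Sum>k. ennreal (f k \<omega>)) \<partial>M) \<noteq> \<infinity>"
    by simp
  then have "AE \<omega> in M. (\<Sum>k. ennreal (f k \<omega>)) \<noteq> \<infinity>"
    by (intro nn_integral_PInf_AE) auto
  then show ?thesis
    by eventually_elim (use nonneg in \<open>auto intro: summable_suminf_not_top\<close>)
qed

locale geometric_increments = prob_space +
  fixes X :: "nat \<Rightarrow> 'a \<Rightarrow> real" and K \<rho> :: real
  assumes integrable_X: "\<And>t. integrable M (X t)"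
    and integrable_X_square: "\<And>t. integrable M (\<lambda>\<omega>. (X t \<omega>)\<^sup>2)"
    and increment_bound: "\<And>t. (\<integral>\<omega>. (X (Suc t) \<omega> - X t \<omega>)\<^sup>2 \<partial>M) \<le> K * \<rho> ^ t"
    and rho_nonneg: "0 \<le> \<rho>" and rho_less_1: "\<rho> < 1"
begin

text \<open>With \<rho> < q < 1, the squared increments weighted by q^-k still have summable means, and
  the increments are dominated by these weighted squares plus q^k (AM-GM).\<close>
definition q :: real where "q = (1 + \<rho>) / 2"

definition J :: "nat \<Rightarrow> 'a \<Rightarrow> real" where
  "J k \<omega> = (X (Suc k) \<omega> - X k \<omega>)\<^sup>2 / q ^ k"

text \<open>Where the sequence diverges, lim yields an arbitrary value; this happens only on a null set.\<close>
definition X_lim :: "'a \<Rightarrow> real" where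
  "X_lim \<omega> = lim (\<lambda>t. X t \<omega>)"

lemma q_pos: "0 < q" and q_less_1: "q < 1" and rho_div_q: "0 \<le> \<rho> / q" "\<rho> / q < 1"
  using rho_nonneg rho_less_1 by (auto simp: q_def)

lemma measurable_X [measurable]: "X t \<in> borel_measurable M"
  using integrable_X by auto

lemma measurable_J [measurable]: "J k \<in> borel_measurable M"
  unfolding J_def by measurable

lemma measurable_X_lim [measurable]: "X_lim \<in> borel_measurable M"
  unfolding X_lim_def by measurable

lemma J_nonneg: "0 \<le> J k \<omega>"
  using q_pos by (simp add: J_def)

lemma integrable_increment_square: "integrable M (\<lambda>\<omega>. (X (Suc k) \<omega> - X k \<omega>)\<^sup>2)"
proof (rule Bochner_Integration.integrable_bound)
  show "integrable M (\<lambda>\<omega>. 2 * (X (Suc k) \<omega>)\<^sup>2 + 2 * (X k \<omega>)\<^sup>2)"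
    using integrable_X_square by simp
  have "(u - v)\<^sup>2 \<le> 2 * u\<^sup>2 + 2 * v\<^sup>2" for u v :: real
    using sum_power2_ge_zero[of "u + v" 0] by (simp add: power2_eq_square algebra_simps)
  then show "AE \<omega> in M. norm ((X (Suc k) \<omega> - X k \<omega>)\<^sup>2) \<le> norm (2 * (X (Suc k) \<omega>)\<^sup>2 + 2 * (X k \<omega>)\<^sup>2)"
    by (intro AE_I2) simp
qed simp

lemma integrable_J: "integrable M (J k)"
  unfolding J_def using integrable_increment_square by simp

lemma integral_J_le: "(\<integral>\<omega>. J k \<omega> \<partial>M) \<le> K * (\<rho> / q) ^ k"
  using increment_bound[of k] q_pos by (simp add: J_def power_divide divide_right_mono)

lemma summable_integral_J: "summable (\<lambda>k. \<integral>\<omega>. J k \<omega> \<partial>M)"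
proof (rule summable_comparison_test')
  show "summable (\<lambda>k. K * (\<rho> / q) ^ k)"
    using rho_div_q by (intro summable_mult summable_geometric) simp
  show "norm (\<integral>\<omega>. J k \<omega> \<partial>M) \<le> K * (\<rho> / q) ^ k" for k
    using integral_J_le[of k] J_nonneg by (simp add: integral_nonneg_AE)
qed

lemma AE_summable_J: "AE \<omega> in M. summable (\<lambda>k. J k \<omega>)"
  using integrable_J J_nonneg summable_integral_J by (rule AE_summable_of_summable_integral)

lemma abs_increment_le: "\<bar>X (Suc k) \<omega> - X k \<omega>\<bar> \<le> (J k \<omega> + q ^ k) / 2"
proof -
  have "0 \<le> (\<bar>X (Suc k) \<omega> - X k \<omega>\<bar> - q ^ k)\<^sup>2"
    by simp
  then have "2 * q ^ k * \<bar>X (Suc k) \<omega> - X k \<omega>\<bar> \<le> (X (Suc k) \<omega> - X k \<omega>)\<^sup>2 + (q ^ k)\<^sup>2"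
    by (simp add: power2_eq_square algebra_simps)
  then show ?thesis
    using q_pos by (simp add: J_def field_simps power2_eq_square)
qed

lemma summable_abs_increment:
  assumes "summable (\<lambda>k. J k \<omega>)"
  shows "summable (\<lambda>k. \<bar>X (Suc k) \<omega> - X k \<omega>\<bar>)"
proof (rule summable_comparison_test')
  show "summable (\<lambda>k. (J k \<omega> + q ^ k) / 2)"
    using assms q_pos q_less_1 by (intro summable_divide summable_add summable_geometric) auto
  show "norm \<bar>X (Suc k) \<omega> - X k \<omega>\<bar> \<le> (J k \<omega> + q ^ k) / 2" for k
    using abs_increment_le by simp
qed

lemma X_telescope: "X t \<omega> = X 0 \<omega> + (\<Sum>k<t. X (Suc k) \<omega> - X k \<omega>)"
  by (simp add: sum_lessThan_telescope[of "\<lambda>k. X k \<omega>"])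

lemma X_lim_eq:
  assumes "summable (\<lambda>k. J k \<omega>)"
  shows "(\<lambda>t. X t \<omega>) \<longlonglongrightarrow> X_lim \<omega>" "X_lim \<omega> = X 0 \<omega> + (\<Sum>k. X (Suc k) \<omega> - X k \<omega>)"
proof -
  have "(\<lambda>t. X 0 \<omega> + (\<Sum>k<t. X (Suc k) \<omega> - X k \<omega>)) \<longlonglongrightarrow> X 0 \<omega> + (\<Sum>k. X (Suc k) \<omega> - X k \<omega>)"
    by (intro tendsto_add tendsto_const
        summable_LIMSEQ[OF summable_rabs_cancel[OF summable_abs_increment[OF assms]]])
  then have "(\<lambda>t. X t \<omega>) \<longlonglongrightarrow> X 0 \<omega> + (\<Sum>k. X (Suc k) \<omega> - X k \<omega>)"
    by (simp only: X_telescope[symmetric])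
  then show "(\<lambda>t. X t \<omega>) \<longlonglongrightarrow> X_lim \<omega>" "X_lim \<omega> = X 0 \<omega> + (\<Sum>k. X (Suc k) \<omega> - X k \<omega>)"
    by (simp_all add: X_lim_def convergent_LIMSEQ_iff limI convergentI)
qed

lemma AE_tendsto_X_lim: "AE \<omega> in M. (\<lambda>t. X t \<omega>) \<longlonglongrightarrow> X_lim \<omega>"
  using AE_summable_J by eventually_elim (rule X_lim_eq(1))

lemma summable_J_shift: "summable (\<lambda>k. J k \<omega>) \<Longrightarrow> summable (\<lambda>k. J (k + t) \<omega>)"
  using summable_ignore_initial_segment[of "\<lambda>k. J k \<omega>" t] by simp

lemma tail_square_le:
  assumes summable: "summable (\<lambda>k. J k \<omega>)"
  shows "(X_lim \<omega> - X t \<omega>)\<^sup>2 \<le> q ^ t / (1 - q) * (\<Sum>k. J (k + t) \<omega>)"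
proof -
  define r where "r = sqrt q"
  have r: "0 < r" "\<And>m. (r ^ m)\<^sup>2 = q ^ m"
    using q_pos by (simp_all add: r_def flip: power_square_commute)
  define inc where "inc k = \<bar>X (Suc (k + t)) \<omega> - X (k + t) \<omega>\<bar> / r ^ (k + t)" for k
  have inc_sq: "(inc k)\<^sup>2 = J (k + t) \<omega>" for k
    by (simp add: inc_def J_def power_divide r(2))
  have inc_weight: "inc k * r ^ (k + t) = \<bar>X (Suc (k + t)) \<omega> - X (k + t) \<omega>\<bar>" for k
    using r(1) by (simp add: inc_def)
  have summable_abs: "summable (\<lambda>k. \<bar>X (Suc (k + t)) \<omega> - X (k + t) \<omega>\<bar>)"
    using summable_ignore_initial_segment[OF summable_abs_increment[OF summable]] by simp
  have summable_q: "summable (\<lambda>k. q ^ (k + t))"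
    using q_pos q_less_1 summable_ignore_initial_segment[OF summable_geometric[of q]] by simp
  have "X_lim \<omega> - X t \<omega> = (\<Sum>k. X (Suc (k + t)) \<omega> - X (k + t) \<omega>)"
    using summable_rabs_cancel[OF summable_abs_increment[OF summable]]
    by (simp add: X_lim_eq(2)[OF summable] X_telescope[of t]
        suminf_minus_initial_segment[of "\<lambda>k. X (Suc k) \<omega> - X k \<omega>" t])
  then have "\<bar>X_lim \<omega> - X t \<omega>\<bar> \<le> (\<Sum>k. \<bar>X (Suc (k + t)) \<omega> - X (k + t) \<omega>\<bar>)"
    using summable_rabs[OF summable_abs] by simp
  then have "(X_lim \<omega> - X t \<omega>)\<^sup>2 \<le> (\<Sum>k. \<bar>X (Suc (k + t)) \<omega> - X (k + t) \<omega>\<bar>)\<^sup>2"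
    by (metis abs_ge_zero power2_abs power_mono)
  also have "\<dots> \<le> (\<Sum>k. (inc k)\<^sup>2) * (\<Sum>k. (r ^ (k + t))\<^sup>2)"
    unfolding inc_weight[symmetric]
    by (rule Cauchy_Schwarz_suminf)
      (use summable_J_shift[OF summable] summable_q summable_abs in \<open>simp_all add: inc_sq r(2) inc_weight\<close>)
  also have "(\<Sum>k. (r ^ (k + t))\<^sup>2) = q ^ t / (1 - q)"
    using q_pos q_less_1 suminf_mult[OF summable_geometric[of q], of "q ^ t"]
    by (simp only: r(2)) (simp add: power_add suminf_geometric mult.commute)
  finally show ?thesis
    by (simp add: inc_sq mult.commute)
qed

lemma integral_J_tail:
  "integrable M (\<lambda>\<omega>. \<Sum>k. J (k + t) \<omega>) \<and>
   (\<integral>\<omega>. (\<Sum>k. J (k + t) \<omega>) \<partial>M) \<le> K * (\<rho> / q) ^ t / (1 - \<rho> / q)"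
proof -
  have summable_AE: "AE \<omega> in M. summable (\<lambda>k. norm (J (k + t) \<omega>))"
    using AE_summable_J by eventually_elim (simp add: J_nonneg summable_J_shift)
  have bound: "(\<integral>\<omega>. norm (J (k + t) \<omega>) \<partial>M) \<le> K * (\<rho> / q) ^ t * (\<rho> / q) ^ k" for k
    using integral_J_le[of "k + t"] J_nonneg by (simp add: power_add mult_ac)
  have summable_bound: "summable (\<lambda>k. K * (\<rho> / q) ^ t * (\<rho> / q) ^ k)"
    using rho_div_q by (intro summable_mult summable_geometric) simp
  have summable_int: "summable (\<lambda>k. \<integral>\<omega>. norm (J (k + t) \<omega>) \<partial>M)"
    using bound by (intro summable_comparison_test'[OF summable_bound]) (simp add: integral_nonneg_AE)
  have "(\<integral>\<omega>. (\<Sum>k. J (k + t) \<omega>) \<partial>M) = (\<Sum>k. \<integral>\<omega>. J (k + t) \<omega> \<partial>M)"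
    using integrable_J summable_AE summable_int by (intro integral_suminf) auto
  also have "\<dots> \<le> (\<Sum>k. K * (\<rho> / q) ^ t * (\<rho> / q) ^ k)"
    using bound summable_int summable_bound J_nonneg by (intro suminf_le) auto
  also have "\<dots> = K * (\<rho> / q) ^ t / (1 - \<rho> / q)"
    using rho_div_q by (simp add: suminf_mult suminf_geometric)
  finally show ?thesis
    using integrable_J summable_AE summable_int by (auto intro: integrable_suminf)
qed

lemma L2_distance_le:
  "integrable M (\<lambda>\<omega>. (X t \<omega> - X_lim \<omega>)\<^sup>2) \<and>
   (\<integral>\<omega>. (X t \<omega> - X_lim \<omega>)\<^sup>2 \<partial>M) \<le> K / ((1 - q) * (1 - \<rho> / q)) * \<rho> ^ t"
proof -
  note tail = integral_J_tail[of t]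
  have nonneg: "0 \<le> q ^ t / (1 - q) * (\<Sum>k. J (k + t) \<omega>)" if "summable (\<lambda>k. J k \<omega>)" for \<omega>
  proof -
    have "0 \<le> (\<Sum>k. J (k + t) \<omega>)"
      using that by (intro suminf_nonneg summable_J_shift) (auto simp: J_nonneg)
    then show ?thesis
      using q_pos q_less_1 by simp
  qed
  have AE_le: "AE \<omega> in M. (X t \<omega> - X_lim \<omega>)\<^sup>2 \<le> q ^ t / (1 - q) * (\<Sum>k. J (k + t) \<omega>) \<and>
      0 \<le> q ^ t / (1 - q) * (\<Sum>k. J (k + t) \<omega>)"
    using AE_summable_J by eventually_elim (metis nonneg tail_square_le power2_commute)
  have int_bound: "integrable M (\<lambda>\<omega>. q ^ t / (1 - q) * (\<Sum>k. J (k + t) \<omega>))"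
    using tail by simp
  have int: "integrable M (\<lambda>\<omega>. (X t \<omega> - X_lim \<omega>)\<^sup>2)"
  proof (rule Bochner_Integration.integrable_bound[OF int_bound])
    show "AE \<omega> in M. norm ((X t \<omega> - X_lim \<omega>)\<^sup>2) \<le> norm (q ^ t / (1 - q) * (\<Sum>k. J (k + t) \<omega>))"
      using AE_le by eventually_elim (metis abs_of_nonneg real_norm_def zero_le_power2)
  qed simp
  have AE_le: "AE \<omega> in M. (X t \<omega> - X_lim \<omega>)\<^sup>2 \<le> q ^ t / (1 - q) * (\<Sum>k. J (k + t) \<omega>)"
    using AE_le by eventually_elim simp
  have "(\<integral>\<omega>. (X t \<omega> - X_lim \<omega>)\<^sup>2 \<partial>M) \<le> (\<integral>\<omega>. q ^ t / (1 - q) * (\<Sum>k. J (k + t) \<omega>) \<partial>M)"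
    using int int_bound AE_le by (rule integral_mono_AE)
  also have "\<dots> = q ^ t / (1 - q) * (\<integral>\<omega>. (\<Sum>k. J (k + t) \<omega>) \<partial>M)"
    by (rule integral_mult_right_zero)
  also have "\<dots> \<le> q ^ t / (1 - q) * (K * (\<rho> / q) ^ t / (1 - \<rho> / q))"
    using tail q_pos q_less_1 by (intro mult_left_mono) auto
  also have "\<dots> = K / ((1 - q) * (1 - \<rho> / q)) * \<rho> ^ t"
    using q_pos by (simp add: power_divide)
  finally show ?thesis
    using int by simp
qed

lemma L2_tendsto: "(\<lambda>t. \<integral>\<omega>. (X t \<omega> - X_lim \<omega>)\<^sup>2 \<partial>M) \<longlonglongrightarrow> 0"
proof (rule tendsto_sandwich[of "\<lambda>_. 0" _ _ "\<lambda>t. K / ((1 - q) * (1 - \<rho> / q)) * \<rho> ^ t"])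
  show "(\<lambda>t. K / ((1 - q) * (1 - \<rho> / q)) * \<rho> ^ t) \<longlonglongrightarrow> 0"
    using rho_nonneg rho_less_1 by (intro tendsto_mult_right_zero LIMSEQ_power_zero) simp
qed (use L2_distance_le in auto)

lemma integrable_X_lim_square: "integrable M (\<lambda>\<omega>. (X_lim \<omega>)\<^sup>2)"
proof (rule Bochner_Integration.integrable_bound)
  show "integrable M (\<lambda>\<omega>. 2 * (X 0 \<omega> - X_lim \<omega>)\<^sup>2 + 2 * (X 0 \<omega>)\<^sup>2)"
    using L2_distance_le[of 0] integrable_X_square[of 0] by simp
  have "v\<^sup>2 \<le> 2 * (u - v)\<^sup>2 + 2 * u\<^sup>2" for u v :: real
    using sum_power2_ge_zero[of "2 * u - v" 0] by (simp add: power2_eq_square algebra_simps)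
  then show "AE \<omega> in M. norm ((X_lim \<omega>)\<^sup>2) \<le> norm (2 * (X 0 \<omega> - X_lim \<omega>)\<^sup>2 + 2 * (X 0 \<omega>)\<^sup>2)"
    by (intro AE_I2) simp
qed simp

lemma summable_integral_abs_increment: "summable (\<lambda>k. \<integral>\<omega>. \<bar>X (Suc k) \<omega> - X k \<omega>\<bar> \<partial>M)"
proof (rule summable_comparison_test')
  show "summable (\<lambda>k. ((\<integral>\<omega>. J k \<omega> \<partial>M) + q ^ k) / 2)"
    using q_pos q_less_1 by (intro summable_divide summable_add summable_integral_J summable_geometric) auto
  show "norm (\<integral>\<omega>. \<bar>X (Suc k) \<omega> - X k \<omega>\<bar> \<partial>M) \<le> ((\<integral>\<omega>. J k \<omega> \<partial>M) + q ^ k) / 2" for k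
  proof -
    have "(\<integral>\<omega>. \<bar>X (Suc k) \<omega> - X k \<omega>\<bar> \<partial>M) \<le> (\<integral>\<omega>. (J k \<omega> + q ^ k) / 2 \<partial>M)"
      using integrable_J[of k] integrable_X abs_increment_le by (intro integral_mono) auto
    then show ?thesis
      using integrable_J[of k] by (simp add: prob_space)
  qed
qed

lemma integral_X_tendsto: "(\<lambda>t. \<integral>\<omega>. X t \<omega> \<partial>M) \<longlonglongrightarrow> (\<integral>\<omega>. X_lim \<omega> \<partial>M)"
proof -
  define inc where "inc k \<omega> = X (Suc k) \<omega> - X k \<omega>" for k \<omega>
  have int_inc: "integrable M (inc k)" for k
    using integrable_X by (simp add: inc_def[abs_def])
  have summable_AE: "AE \<omega> in M. summable (\<lambda>k. norm (inc k \<omega>))"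
    using AE_summable_J by eventually_elim (simp add: inc_def summable_abs_increment)
  have summable_int: "summable (\<lambda>k. \<integral>\<omega>. norm (inc k \<omega>) \<partial>M)"
    using summable_integral_abs_increment by (simp add: inc_def)
  have "(\<integral>\<omega>. X_lim \<omega> \<partial>M) = (\<integral>\<omega>. X 0 \<omega> + (\<Sum>k. inc k \<omega>) \<partial>M)"
    using AE_summable_J integrable_suminf[OF int_inc summable_AE summable_int] integrable_X[of 0]
    by (intro integral_cong_AE) (auto elim!: eventually_mono simp: X_lim_eq(2) inc_def)
  also have "\<dots> = (\<integral>\<omega>. X 0 \<omega> \<partial>M) + (\<Sum>k. \<integral>\<omega>. inc k \<omega> \<partial>M)"
    using integrable_suminf[OF int_inc summable_AE summable_int] integrable_X[of 0]
      integral_suminf[OF int_inc summable_AE summable_int] by simp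
  finally have lim: "(\<integral>\<omega>. X_lim \<omega> \<partial>M) = (\<integral>\<omega>. X 0 \<omega> \<partial>M) + (\<Sum>k. \<integral>\<omega>. inc k \<omega> \<partial>M)" .
  have "(\<lambda>t. \<integral>\<omega>. X t \<omega> \<partial>M) = (\<lambda>t. (\<integral>\<omega>. X 0 \<omega> \<partial>M) + (\<Sum>k<t. \<integral>\<omega>. inc k \<omega> \<partial>M))"
  proof
    show "(\<integral>\<omega>. X t \<omega> \<partial>M) = (\<integral>\<omega>. X 0 \<omega> \<partial>M) + (\<Sum>k<t. \<integral>\<omega>. inc k \<omega> \<partial>M)" for t
      using integrable_X by (induction t) (simp_all add: inc_def[abs_def])
  qed
  moreover have "(\<lambda>t. (\<integral>\<omega>. X 0 \<omega> \<partial>M) + (\<Sum>k<t. \<integral>\<omega>. inc k \<omega> \<partial>M)) \<longlonglongrightarrow> (\<integral>\<omega>. X_lim \<omega> \<partial>M)"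
  proof -
    have "summable (\<lambda>k. \<integral>\<omega>. inc k \<omega> \<partial>M)"
      by (rule summable_comparison_test'[OF summable_int]) (rule integral_norm_bound)
    then show ?thesis
      unfolding lim by (intro tendsto_add tendsto_const summable_LIMSEQ)
  qed
  ultimately show ?thesis
    by (simp only:)
qed

lemma abs_square_diff_le:
  fixes u v c :: real
  assumes "0 < c"
  shows "\<bar>u\<^sup>2 - v\<^sup>2\<bar> \<le> (1 + 1 / c) * (u - v)\<^sup>2 + c * v\<^sup>2"
proof -
  have "2 * \<bar>u - v\<bar> * \<bar>v\<bar> \<le> (u - v)\<^sup>2 / c + c * v\<^sup>2"
  proof -
    have "0 \<le> (\<bar>u - v\<bar> - c * \<bar>v\<bar>)\<^sup>2"
      by simp
    then have "2 * c * (\<bar>u - v\<bar> * \<bar>v\<bar>) \<le> (u - v)\<^sup>2 + (c * v)\<^sup>2"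
      by (simp add: power2_eq_square algebra_simps abs_mult_self_eq)
    then show ?thesis
      using assms by (simp add: field_simps power2_eq_square)
  qed
  moreover have "\<bar>u\<^sup>2 - v\<^sup>2\<bar> \<le> (u - v)\<^sup>2 + 2 * \<bar>u - v\<bar> * \<bar>v\<bar>"
  proof -
    have "\<bar>u\<^sup>2 - v\<^sup>2\<bar> = \<bar>(u - v)\<^sup>2 + 2 * (u - v) * v\<bar>"
      by (rule arg_cong[where f=abs]) (simp add: power2_eq_square algebra_simps)
    also have "\<dots> \<le> \<bar>(u - v)\<^sup>2\<bar> + \<bar>2 * (u - v) * v\<bar>"
      by (rule abs_triangle_ineq)
    finally show ?thesis
      by (simp only: abs_mult abs_numeral abs_power2)
  qed
  ultimately show ?thesis
    by (simp add: algebra_simps)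
qed

lemma L1_square_tendsto: "(\<lambda>t. \<integral>\<omega>. \<bar>(X t \<omega>)\<^sup>2 - (X_lim \<omega>)\<^sup>2\<bar> \<partial>M) \<longlonglongrightarrow> 0"
proof -
  define Kc where "Kc = K / ((1 - q) * (1 - \<rho> / q))"
  define E where "E = (\<integral>\<omega>. (X_lim \<omega>)\<^sup>2 \<partial>M)"
  have le: "(\<integral>\<omega>. \<bar>(X t \<omega>)\<^sup>2 - (X_lim \<omega>)\<^sup>2\<bar> \<partial>M) \<le> Kc * \<rho> ^ t + Kc * (\<rho> / q) ^ t + q ^ t * E" for t
  proof -
    have qt: "0 < q ^ t"
      using q_pos by simp
    have int_bound: "integrable M (\<lambda>\<omega>. (1 + 1 / q ^ t) * (X t \<omega> - X_lim \<omega>)\<^sup>2 + q ^ t * (X_lim \<omega>)\<^sup>2)"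
      using L2_distance_le[of t] integrable_X_lim_square by simp
    have "(\<integral>\<omega>. \<bar>(X t \<omega>)\<^sup>2 - (X_lim \<omega>)\<^sup>2\<bar> \<partial>M) \<le>
        (\<integral>\<omega>. (1 + 1 / q ^ t) * (X t \<omega> - X_lim \<omega>)\<^sup>2 + q ^ t * (X_lim \<omega>)\<^sup>2 \<partial>M)"
    proof (rule integral_mono[OF _ int_bound abs_square_diff_le[OF qt]])
      show "integrable M (\<lambda>\<omega>. \<bar>(X t \<omega>)\<^sup>2 - (X_lim \<omega>)\<^sup>2\<bar>)"
        using integrable_X_square[of t] integrable_X_lim_square by simp
    qed
    also have "\<dots> = (1 + 1 / q ^ t) * (\<integral>\<omega>. (X t \<omega> - X_lim \<omega>)\<^sup>2 \<partial>M) + q ^ t * E"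
      using L2_distance_le[of t] integrable_X_lim_square by (simp add: E_def)
    also have "\<dots> \<le> (1 + 1 / q ^ t) * (Kc * \<rho> ^ t) + q ^ t * E"
      using L2_distance_le[of t] qt unfolding Kc_def
      by (intro add_right_mono mult_left_mono) (auto intro: add_nonneg_nonneg)
    also have "\<dots> = Kc * \<rho> ^ t + Kc * (\<rho> / q) ^ t + q ^ t * E"
      using qt by (simp add: power_divide field_simps)
    finally show ?thesis .
  qed
  show ?thesis
  proof (rule tendsto_sandwich[OF _ _ tendsto_const])
    show "\<forall>\<^sub>F t in sequentially. 0 \<le> (\<integral>\<omega>. \<bar>(X t \<omega>)\<^sup>2 - (X_lim \<omega>)\<^sup>2\<bar> \<partial>M)"
      by simp
    show "\<forall>\<^sub>F t in sequentially.
        (\<integral>\<omega>. \<bar>(X t \<omega>)\<^sup>2 - (X_lim \<omega>)\<^sup>2\<bar> \<partial>M) \<le> Kc * \<rho> ^ t + Kc * (\<rho> / q) ^ t + q ^ t * E"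
      using le by simp
    have "(\<lambda>t. Kc * \<rho> ^ t + Kc * (\<rho> / q) ^ t + q ^ t * E) \<longlonglongrightarrow> Kc * 0 + Kc * 0 + 0 * E"
      using rho_nonneg rho_less_1 rho_div_q q_pos q_less_1
      by (intro tendsto_add tendsto_mult tendsto_const LIMSEQ_power_zero) auto
    then show "(\<lambda>t. Kc * \<rho> ^ t + Kc * (\<rho> / q) ^ t + q ^ t * E) \<longlonglongrightarrow> 0"
      by simp
  qed
qed

end

context gw_lin_stat
begin

lemma uniformly_integrable_normalized:
  assumes "\<alpha> < \<mu>\<^sup>2"
  shows "uniformly_integrable M (\<lambda>t \<omega>. lin_stat c1 c2 (W t \<omega>) / \<mu> ^ t)"
  by (rule uniformly_integrable_of_L2_bounded[OF _ _ expectation_normalized_square_le[OF assms]])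
    (simp_all add: integrable_lin_stat integrable_lin_stat_square power_divide)

lemma normalized_limit:
  assumes "\<alpha> < \<mu>\<^sup>2"
  shows "\<exists>Z \<in> borel_measurable M.
    (AE \<omega> in M. (\<lambda>t. lin_stat c1 c2 (W t \<omega>) / \<mu> ^ t) \<longlonglongrightarrow> Z \<omega>) \<and>
    integrable M (\<lambda>\<omega>. (Z \<omega>)\<^sup>2) \<and>
    (\<lambda>t. \<integral>\<omega>. (lin_stat c1 c2 (W t \<omega>) / \<mu> ^ t - Z \<omega>)\<^sup>2 \<partial>M) \<longlonglongrightarrow> 0 \<and>
    (\<integral>\<omega>. Z \<omega> \<partial>M) = c1 \<and>
    (\<lambda>t. \<integral>\<omega>. \<bar>(lin_stat c1 c2 (W t \<omega>) / \<mu> ^ t)\<^sup>2 - (Z \<omega>)\<^sup>2\<bar> \<partial>M) \<longlonglongrightarrow> 0"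
proof -
  have "0 < \<mu>\<^sup>2"
    using assms alpha_pos by linarith
  then have \<mu>: "\<mu> \<noteq> 0" and ratio: "0 \<le> \<alpha> / \<mu>\<^sup>2" "\<alpha> / \<mu>\<^sup>2 < 1"
    using assms alpha_pos by auto
  interpret geometric_increments M "\<lambda>t \<omega>. lin_stat c1 c2 (W t \<omega>) / \<mu> ^ t" "C / \<mu>\<^sup>2" "\<alpha> / \<mu>\<^sup>2"
    using ratio expectation_normalized_increment_square[OF \<mu>]
    by unfold_locales (simp_all add: integrable_lin_stat integrable_lin_stat_square power_divide)
  have "(\<lambda>t. \<integral>\<omega>. lin_stat c1 c2 (W t \<omega>) / \<mu> ^ t \<partial>M) = (\<lambda>_. c1)"
    using \<mu> by (simp add: expectation_lin_stat)
  then have "(\<integral>\<omega>. X_lim \<omega> \<partial>M) = c1"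
    using integral_X_tendsto by (simp add: LIMSEQ_const_iff)
  moreover have "X_lim \<in> borel_measurable M"
    by measurable
  ultimately show ?thesis
    using AE_tendsto_X_lim integrable_X_lim_square L2_tendsto L1_square_tendsto
    by (intro bexI[where x=X_lim]) simp_all
qed

end

theorem lemma5p3:
  fixes d :: nat and a b :: real
    and M :: "'w measure" and W :: "nat \<Rightarrow> 'w \<Rightarrow> nat \<times> nat"
  assumes "d \<ge> 3" and "a \<ge> b" and "b > 0"
    and "is_gw_count_process d a b M W"
  defines "\<alpha> \<equiv> gw_alpha d a b" and "\<beta> \<equiv> gw_beta d a b"
  defines "G \<equiv> gen_filtration M W"
  defines "Mt \<equiv> (\<lambda>t \<omega>. (real (fst (W t \<omega>)) + real (snd (W t \<omega>))) / \<alpha> ^ t)"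
  defines "Dt \<equiv> (\<lambda>t \<omega>. (real (fst (W t \<omega>)) - real (snd (W t \<omega>))) / \<beta> ^ t)"
  shows "martingale M G Mt \<and>
         (a > b \<longrightarrow> martingale M G Dt) \<and>
         (\<beta>\<^sup>2 > \<alpha> \<and> \<alpha> > 1 \<longrightarrow>
           uniformly_integrable M Mt \<and> uniformly_integrable M Dt \<and>
           (\<exists>Dinf \<in> borel_measurable M.
              (AE \<omega> in M. (\<lambda>t. Dt t \<omega>) \<longlonglongrightarrow> Dinf \<omega>) \<and>
              integrable M (\<lambda>\<omega>. (Dinf \<omega>)\<^sup>2) \<and>
              (\<lambda>t. \<integral>\<omega>. (Dt t \<omega> - Dinf \<omega>)\<^sup>2 \<partial>M) \<longlonglongrightarrow> 0 \<and>
              (\<integral>\<omega>. Dinf \<omega> \<partial>M) = 1 \<and>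
              (\<lambda>t. \<integral>\<omega>. \<bar>(Dt t \<omega>)\<^sup>2 - (Dinf \<omega>)\<^sup>2\<bar> \<partial>M) \<longlonglongrightarrow> 0))"
proof -
  obtain n where d: "d = Suc n" and n: "2 \<le> n"
    using assms(1) by (cases d) auto
  interpret gw_count_process n a b M W
    using assms d n by unfold_locales auto
  interpret total: gw_lin_stat n a b M W 1 1 "gw_alpha (Suc n) a b" var_total
    by unfold_locales (simp_all add: integral_step_total integral_step_total_square var_total_nonneg)
  interpret diff: gw_lin_stat n a b M W 1 "- 1" "gw_beta (Suc n) a b" var_diff
    by unfold_locales (simp_all add: integral_step_diff integral_step_diff_square var_diff_nonneg)
  have Mt: "Mt = (\<lambda>t \<omega>. lin_stat 1 1 (W t \<omega>) / \<alpha> ^ t)"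
    and Dt: "Dt = (\<lambda>t \<omega>. lin_stat 1 (- 1) (W t \<omega>) / \<beta> ^ t)"
    by (simp_all add: Mt_def Dt_def lin_stat_def)
  have \<alpha>: "\<alpha> = gw_alpha (Suc n) a b" "0 < \<alpha>" and \<beta>: "\<beta> = gw_beta (Suc n) a b"
    using alpha_pos by (simp_all add: \<alpha>_def \<beta>_def d)
  have "a > b \<longrightarrow> \<beta> \<noteq> 0"
    using n by (simp add: \<beta> beta_eq)
  moreover have "\<alpha> < \<alpha>\<^sup>2" if "1 < \<alpha>"
    using that by (simp add: power2_eq_square)
  ultimately show ?thesis
    unfolding Mt Dt G_def \<alpha>(1) \<beta>
    using total.martingale_lin_stat diff.martingale_lin_stat total.uniformly_integrable_normalized
      diff.uniformly_integrable_normalized diff.normalized_limit \<alpha>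
    by auto
qed

end
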